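(* Let $0<p<1$ and $1<\alpha<2$, and let $\mu,\nu$ be real numbers with $\alpha-2<\mu,\nu<0$ satisfying $$\mu+\nu=\alpha-2,\qquad p\sin(\pi\mu)=(1-p)\sin(\pi\nu).$$ Then for every $n=0,1,2,\ldots$ and $t\in(0,1)$, $$\mathcal{I}_{p,0,1}^{\mu,\nu,2-\alpha}\big[\omega_{*}^{\mu,\nu}G_{n}(\mu,\nu,\cdot)\big](t)=\lambda_{n}G_{n}(\nu,\mu,t),\qquad \lambda_{n}=\frac{\Gamma(n+\alpha-1)}{\Gamma(n+1)}.$$
   Context: $P_n^{a,b}$ denotes the classical Jacobi polynomial of degree $n$ with parameters $a,b>-1$. For $t\in(0,1)$, $G_n(a,b,t):=P_n^{a,b}(2t-1)$ and $\omega_*^{\mu,\nu}(t):=t^{\nu}(1-t)^{\mu}$. For $\sigma>0$ and an interval $(a,b)$, ${}_{a}I_x^{\sigma}v(x)=\frac{1}{\Gamma(\sigma)}\int_a^x (x-y)^{\sigma-1}v(y)\,dy$ and ${}_{x}I_b^{\sigma}v(x)=\frac{1}{\Gamma(\sigma)}\int_x^b (y-x)^{\sigma-1}v(y)\,dy$. With $C_{\alpha,p}:=(\sin\pi\mu+\sin\pi\nu)/\sin\pi\alpha$, the two-sided fractional integral is $\mathcal{I}_{p,a,b}^{\mu,\nu,\varrho}v:=C_{\alpha,p}\big(p\,{}_{a}I_x^{\varrho}v+(1-p)\,{}_{x}I_b^{\varrho}v\big)$. *)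

theory Defs
  imports "HOL-Analysis.Analysis"
begin

definition jacobiP :: "nat \<Rightarrow> real \<Rightarrow> real \<Rightarrow> real \<Rightarrow> real" where
  "jacobiP n a b x =
     (\<Sum>k\<le>n. ((real n + a) gchoose (n - k)) * ((real n + b) gchoose k)
              * ((x - 1) / 2) ^ k * ((x + 1) / 2) ^ (n - k))"

definition G :: "nat \<Rightarrow> real \<Rightarrow> real \<Rightarrow> real \<Rightarrow> real" where
  "G n a b t = jacobiP n a b (2 * t - 1)"

definition omega_star :: "real \<Rightarrow> real \<Rightarrow> real \<Rightarrow> real" where
  "omega_star mu nu t = t powr nu * (1 - t) powr mu"

definition left_frac_int :: "real \<Rightarrow> real \<Rightarrow> (real \<Rightarrow> real) \<Rightarrow> real \<Rightarrow> real" where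
  "left_frac_int sg a v x = (1 / Gamma sg) * (LBINT y=a..x. (x - y) powr (sg - 1) * v y)"

definition right_frac_int :: "real \<Rightarrow> real \<Rightarrow> (real \<Rightarrow> real) \<Rightarrow> real \<Rightarrow> real" where
  "right_frac_int sg b v x = (1 / Gamma sg) * (LBINT y=x..b. (y - x) powr (sg - 1) * v y)"

definition C_const :: "real \<Rightarrow> real \<Rightarrow> real \<Rightarrow> real" where
  "C_const alpha mu nu = (sin (pi * mu) + sin (pi * nu)) / sin (pi * alpha)"

definition two_sided_int ::
  "real \<Rightarrow> real \<Rightarrow> real \<Rightarrow> real \<Rightarrow> real \<Rightarrow> real \<Rightarrow> real \<Rightarrow> (real \<Rightarrow> real) \<Rightarrow> real \<Rightarrow> real" where
  "two_sided_int alpha p a b mu nu rho v x =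
     C_const alpha mu nu * (p * left_frac_int rho a v x + (1 - p) * right_frac_int rho b v x)"

end

theory Submission
  imports Defs "HOL-Real_Asymp.Real_Asymp" "HOL-Computational_Algebra.Formal_Power_Series"
begin

(*
  Put \<rho> = 2 - \<alpha>, \<kappa> = \<rho> - 1 = -1 - \<mu> - \<nu> and expand \<omega>*(y) G_n(\<mu>,\<nu>,y) in the weights
  w_m(y) = y^\<nu> (1 - y)^(\<mu> + m), m \<le> n.  For each weight the combination

     sin(\<pi>\<nu>) \<integral>_0^t (t - y)^\<kappa> w_m(y) dy + sin(\<pi>\<mu>) \<integral>_t^1 (y - t)^\<kappa> w_m(y) dy

  equals -\<pi> times the polynomial \<Sum>_j binom(\<mu> + m, m - j) binom(\<kappa>, j) t^j.
  For m = 0 this is the constant -\<pi>: Moebius substitutions turn both integrals into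
  Stieltjes transforms \<integral>_0^\<infinity> u^a (1 + u)^b / (u + s) du, which are related by an
  interchange of integrations and the value -\<pi> s^b / sin(\<pi> b) of \<integral>_0^\<infinity> u^b / (u + s) du.
  Writing 1 - y = (1 - t) \<plusminus> (t - y) gives the step m \<rightarrow> m + 1, whose extra terms are
  the integral over (0, t) of the case m and a Beta integral.  Summed against the
  coefficients of the Jacobi polynomial, Vandermonde's identity collapses the
  polynomials to binom(\<kappa>, n) P_n^(\<mu>,\<nu>)(1 - 2t) = binom(\<kappa>, n) (-1)^n G_n(\<nu>,\<mu>,t).
  The condition p sin(\<pi>\<mu>) = (1 - p) sin(\<pi>\<nu>) makes the two-sided integral exactly
  this combination divided by sin(\<pi>\<alpha>) \<Gamma>(2 - \<alpha>), and the reflection formula turns the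
  constants into \<Gamma>(n + \<alpha> - 1) / \<Gamma>(n + 1).
*)

section \<open>Sine and Gamma function\<close>

lemma not_Ints_between:
  fixes x :: real and k :: int
  assumes "of_int k < x" "x < of_int k + 1"
  shows "x \<notin> \<int>"
proof
  assume "x \<in> \<int>"
  then obtain m where "x = of_int m" by (auto elim: Ints_cases)
  with assms show False by simp
qed

lemma sin_pi_mult_neg:
  fixes b :: real
  assumes "-1 < b" "b < 0"
  shows "sin (pi * b) < 0"
proof -
  have "pi * (-b) < pi * 1"
    using assms by (intro mult_strict_left_mono) auto
  hence "sin (pi * (-b)) > 0"
    using assms by (intro sin_gt_zero) (auto simp: mult_less_0_iff)
  thus ?thesis by simp
qed

lemma sin_pi_mult_nonzero:
  fixes x :: real
  assumes "x \<notin> \<int>"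
  shows "sin (pi * x) \<noteq> 0"
proof
  assume "sin (pi * x) = 0"
  then obtain i :: int where "pi * x = of_int i * pi"
    by (auto simp: sin_zero_iff_int2)
  hence "x = of_int i" by simp
  with assms show False by auto
qed

lemma Gamma_reflection_real:
  fixes x :: real
  shows "Gamma x * Gamma (1 - x) = pi / sin (pi * x)"
proof -
  have "complex_of_real (Gamma x * Gamma (1 - x)) = Gamma (of_real x) * Gamma (1 - of_real x)"
    by (simp flip: Gamma_complex_of_real)
  also have "\<dots> = of_real pi / sin (of_real pi * of_real x)"
    by (rule Gamma_reflection_complex)
  also have "\<dots> = complex_of_real (pi / sin (pi * x))"
    by (simp flip: sin_of_real)
  finally show ?thesis by (simp only: of_real_eq_iff)
qed

lemma sin_mult_Gamma_reflection:
  fixes alpha :: real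
  assumes "alpha \<notin> \<int>"
  shows "sin (pi * alpha) * Gamma (2 - alpha) = - pi / Gamma (alpha - 1)"
proof -
  have "alpha - 1 \<notin> \<int>"
  proof
    assume "alpha - 1 \<in> \<int>"
    hence "alpha - 1 + 1 \<in> \<int>" by (intro Ints_add) auto
    with assms show False by simp
  qed
  hence "Gamma (alpha - 1) \<noteq> 0"
    using nonpos_Ints_subset_Ints by (auto simp: Gamma_eq_zero_iff)
  moreover have "sin (pi * (alpha - 1)) = - sin (pi * alpha)"
    by (simp add: right_diff_distrib sin_diff)
  moreover have "sin (pi * alpha) \<noteq> 0"
    using sin_pi_mult_nonzero[OF assms] .
  ultimately show ?thesis
    using Gamma_reflection_real[of "alpha - 1"] by (simp add: field_simps)
qed

lemma Gamma_ratio_eq_gbinomial: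
  fixes a :: real
  assumes "a \<notin> \<int>\<^sub>\<le>\<^sub>0"
  shows "Gamma (real n + a) / Gamma (real n + 1) = Gamma a * ((-1) ^ n * ((- a) gchoose n))"
proof -
  have "(-1) ^ n * ((- a) gchoose n) = (-1) ^ n * ((-1) ^ n * ((a + real n - 1) gchoose n))"
    by (simp only: gbinomial_minus)
  also have "\<dots> = (a + real n - 1) gchoose n"
    by (simp flip: mult.assoc power_mult_distrib)
  also have "\<dots> = pochhammer a n / fact n"
    by (simp add: gbinomial_pochhammer')
  also have "pochhammer a n = Gamma (a + real n) / Gamma a"
    by (rule pochhammer_Gamma[OF assms])
  also have "fact n = Gamma (real n + 1)"
    using Gamma_fact[of n, where 'a=real] by (simp add: add.commute)
  finally show ?thesis
    using assms by (simp add: Gamma_eq_zero_iff field_simps add.commute)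
qed

lemma sin_mult_Beta_eq_gbinomial:
  fixes mu :: real
  assumes "mu \<notin> \<int>"
  shows "sin (pi * mu) * Beta (1 - mu) (mu + m + 1) = pi * ((mu + m) gchoose (m + 1))"
proof -
  have "mu \<notin> \<int>\<^sub>\<le>\<^sub>0"
    using assms nonpos_Ints_subset_Ints by blast
  hence Gamma_mu: "Gamma (mu + real (m + 1)) = pochhammer mu (m + 1) * Gamma mu"
    using pochhammer_Gamma[of mu "m + 1"] Gamma_eq_zero_iff[of mu] by (simp add: field_simps)
  have Gamma_fact: "Gamma (1 - mu + (mu + real m + 1)) = fact (m + 1)"
    using Gamma_fact[of "m + 1", where 'a=real] by (simp add: add_ac)
  have "sin (pi * mu) * Beta (1 - mu) (mu + m + 1)
        = sin (pi * mu) * (Gamma mu * Gamma (1 - mu)) * (pochhammer mu (m + 1) / fact (m + 1))"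
    unfolding Beta_def Gamma_fact using Gamma_mu by (simp add: add_ac mult_ac)
  also have "\<dots> = pi * (pochhammer mu (m + 1) / fact (m + 1))"
    using sin_pi_mult_nonzero[OF assms] by (simp add: Gamma_reflection_real)
  also have "pochhammer mu (m + 1) / fact (m + 1) = (mu + m) gchoose (m + 1)"
    by (simp add: gbinomial_pochhammer')
  finally show ?thesis .
qed

section \<open>Binomial sums and Jacobi polynomials\<close>

lemma gbinomial_Suc_ratio:
  fixes c :: real
  shows "(c gchoose Suc j) = (c gchoose j) * (c - j) / (j + 1)"
proof -
  have "of_nat (Suc j) * (c gchoose Suc j) = c * ((c - 1) gchoose j)"
    by (rule gbinomial_absorption)
  also have "\<dots> = (c - of_nat j) * (c gchoose j)"
    by (rule gbinomial_absorb_comp[symmetric])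
  finally show ?thesis by (simp add: field_simps)
qed

lemma gbinomial_mult_binomial:
  fixes r :: real and m k :: nat
  assumes "k \<le> m"
  shows "(r gchoose m) * real (m choose k) = (r gchoose k) * ((r - k) gchoose (m - k))"
  using gbinomial_trinomial_revision[OF assms, of r] by (simp add: binomial_gbinomial)

lemma gbinomial_minus_shift:
  fixes N :: real
  shows "(-1) ^ s * ((N + s) gchoose s) = (- (N + 1)) gchoose s"
  using gbinomial_minus[of "N + 1" s] by (simp add: add_ac flip: power_add mult_2)

lemma gbinomial_Vandermonde_partial:
  fixes A :: real and j n :: nat
  assumes "j \<le> n"
  shows "(\<Sum>i\<le>n - j. real ((n - j) choose (n - j - i)) * (A gchoose (j + i))) = (A + real (n - j)) gchoose n"
proof -
  have "(A + real (n - j)) gchoose n = (\<Sum>k\<in>{0..n}. (A gchoose k) * (real (n - j) gchoose (n - k)))"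
    by (rule gbinomial_Vandermonde[symmetric])
  also have "\<dots> = (\<Sum>k\<in>{0..n}. (A gchoose k) * real ((n - j) choose (n - k)))"
    by (simp add: binomial_gbinomial)
  also have "\<dots> = (\<Sum>k\<in>{j..n}. (A gchoose k) * real ((n - j) choose (n - k)))"
    by (rule sum.mono_neutral_right) (use assms in auto)
  also have "\<dots> = (\<Sum>i\<in>{0..n - j}. (A gchoose (j + i)) * real ((n - j) choose (n - (j + i))))"
  proof -
    have "(\<Sum>k\<in>{j..n}. (A gchoose k) * real ((n - j) choose (n - k)))
          = (\<Sum>k\<in>{0+j..(n-j)+j}. (A gchoose k) * real ((n - j) choose (n - k)))"
      using assms by simp
    also have "\<dots> = (\<Sum>i\<in>{0..n-j}. (A gchoose (i + j)) * real ((n - j) choose (n - (i + j))))"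
      by (rule sum.shift_bounds_cl_nat_ivl)
    finally show ?thesis by (simp add: add.commute)
  qed
  also have "\<dots> = (\<Sum>i\<le>n - j. real ((n - j) choose (n - j - i)) * (A gchoose (j + i)))"
    by (simp add: atLeast0AtMost mult.commute diff_diff_left)
  finally show ?thesis ..
qed

lemma sum_triangle_swap_diff:
  fixes f :: "nat \<Rightarrow> nat \<Rightarrow> 'a::comm_monoid_add"
  shows "(\<Sum>k\<le>n. \<Sum>i\<le>n - k. f k i) = (\<Sum>s\<le>n. \<Sum>k\<le>s. f k (s - k))"
proof -
  have "(\<Sum>k\<le>n. \<Sum>i\<le>n - k. f k i) = (\<Sum>(k, i)\<in>Sigma {..n} (\<lambda>k. {..n - k}). f k i)"
    by (rule sum.Sigma) auto
  also have "Sigma {..n} (\<lambda>k. {..n - k}) = {(k, i). k + i \<le> n}"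
    by auto
  also have "(\<Sum>(k, i)\<in>{(k, i). k + i \<le> n}. f k i) = (\<Sum>s\<le>n. \<Sum>k\<le>s. f k (s - k))"
    by (rule sum.triangle_reindex_eq)
  finally show ?thesis .
qed

lemma sum_triangle_reindex:
  fixes g :: "nat \<Rightarrow> nat \<Rightarrow> 'a::comm_monoid_add"
  shows "(\<Sum>s\<le>n. \<Sum>j\<le>s. g s j) = (\<Sum>j\<le>n. \<Sum>i\<le>n - j. g (j + i) j)"
  using sum_triangle_swap_diff[of "\<lambda>j i. g (j + i) j" n] by simp

text \<open>The coefficient of \<open>x ^ m\<close> in \<open>(1 + x) powr a * (1 + t * x) powr c\<close>.\<close>

definition binom_conv :: "real \<Rightarrow> real \<Rightarrow> nat \<Rightarrow> real \<Rightarrow> real" where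
  "binom_conv a c m t = (\<Sum>j\<le>m. (a gchoose (m - j)) * (c gchoose j) * t ^ j)"

lemma binom_conv_pascal:
  "binom_conv (a + 1) c (Suc m) t = binom_conv a c m t + binom_conv a c (Suc m) t"
proof -
  have "((a + 1) gchoose (Suc m - j)) = (a gchoose (m - j)) + (a gchoose (Suc m - j))" if "j \<le> m" for j
    using that by (simp add: Suc_diff_le gbinomial_Suc_Suc)
  hence "(\<Sum>j\<le>m. ((a + 1) gchoose (Suc m - j)) * (c gchoose j) * t ^ j)
         = binom_conv a c m t + (\<Sum>j\<le>m. (a gchoose (Suc m - j)) * (c gchoose j) * t ^ j)"
    by (simp add: binom_conv_def distrib_right sum.distrib)
  thus ?thesis
    by (simp add: binom_conv_def)
qed

lemma binom_conv_Suc_sum: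
  "binom_conv (a + 1) c (Suc m) t
   = (1 - t) * binom_conv a c m t
     + (c + 1) * (\<Sum>j\<le>m. (a gchoose (m - j)) * (c gchoose j) * t ^ (j + 1) / (j + 1))
     + (a gchoose Suc m)"
proof -
  have absorb: "(c gchoose Suc j) * t ^ Suc j = (c + 1) * ((c gchoose j) * t ^ (j + 1) / (j + 1)) - t * ((c gchoose j) * t ^ j)"
    for j
    by (simp add: gbinomial_Suc_ratio field_simps)
  have "binom_conv a c (Suc m) t = (a gchoose Suc m) + (\<Sum>j\<le>m. (a gchoose (m - j)) * ((c gchoose Suc j) * t ^ Suc j))"
    unfolding binom_conv_def by (subst sum.atMost_Suc_shift) (simp add: mult.assoc)
  also have "\<dots> = (a gchoose Suc m) + (c + 1) * (\<Sum>j\<le>m. (a gchoose (m - j)) * (c gchoose j) * t ^ (j + 1) / (j + 1))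
                  - t * binom_conv a c m t"
    unfolding absorb binom_conv_def by (simp add: sum_subtractf sum_distrib_left algebra_simps)
  finally show ?thesis
    unfolding binom_conv_pascal by (simp add: algebra_simps)
qed

lemma jacobiP_coeff_convolution:
  fixes a b :: real
  assumes s: "s \<le> n"
  shows "(\<Sum>k\<le>s. ((n + a) gchoose (n - k)) * ((n + b) gchoose k) * real ((n - k) choose (s - k)))
         = ((n + a) gchoose (n - s)) * ((n + a + b + s) gchoose s)"
proof -
  have "(\<Sum>k\<le>s. ((n + a) gchoose (n - k)) * ((n + b) gchoose k) * real ((n - k) choose (s - k)))
        = (\<Sum>k\<le>s. ((n + a) gchoose (n - s)) * (((n + b) gchoose k) * ((a + s) gchoose (s - k))))"
  proof (rule sum.cong[OF refl])
    fix k assume "k \<in> {..s}"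
    hence k: "k \<le> s" by simp
    have "(n - k) choose (s - k) = (n - k) choose (n - s)"
      using k s by (subst binomial_symmetric) (auto simp: diff_diff_left)
    hence "((n + a) gchoose (n - k)) * real ((n - k) choose (s - k))
           = ((n + a) gchoose (n - s)) * ((n + a - real (n - s)) gchoose (n - k - (n - s)))"
      using k s by (simp add: gbinomial_mult_binomial)
    also have "n + a - real (n - s) = a + s"
      using s by (simp add: of_nat_diff)
    also have "n - k - (n - s) = s - k"
      using k s by simp
    finally show "((n + a) gchoose (n - k)) * ((n + b) gchoose k) * real ((n - k) choose (s - k))
                  = ((n + a) gchoose (n - s)) * (((n + b) gchoose k) * ((a + s) gchoose (s - k)))"
      by (simp add: mult_ac)
  qed
  also have "\<dots> = ((n + a) gchoose (n - s)) * ((n + a + b + s) gchoose s)"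
    using gbinomial_Vandermonde[of "n + b" "a + s" s] by (simp add: atLeast0AtMost add_ac flip: sum_distrib_left)
  finally show ?thesis .
qed

lemma jacobiP_altdef:
  fixes a b x :: real
  shows "jacobiP n a b x = (\<Sum>s\<le>n. ((n + a) gchoose (n - s)) * ((n + a + b + s) gchoose s) * ((x - 1) / 2) ^ s)"
proof -
  define u where "u = (x - 1) / 2"
  define A where "A k = ((n + a) gchoose (n - k)) * ((n + b) gchoose k)" for k
  have "(x + 1) / 2 = u + 1"
    by (simp add: u_def field_simps)
  hence "jacobiP n a b x = (\<Sum>k\<le>n. A k * u ^ k * (u + 1) ^ (n - k))"
    unfolding jacobiP_def A_def by (simp only: u_def)
  also have "\<dots> = (\<Sum>k\<le>n. \<Sum>i\<le>n - k. A k * real ((n - k) choose i) * u ^ (k + i))"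
    by (simp add: binomial_ring[of u 1] sum_distrib_left power_add mult_ac)
  also have "\<dots> = (\<Sum>s\<le>n. \<Sum>k\<le>s. A k * real ((n - k) choose (s - k)) * u ^ (k + (s - k)))"
    by (rule sum_triangle_swap_diff)
  also have "\<dots> = (\<Sum>s\<le>n. (\<Sum>k\<le>s. A k * real ((n - k) choose (s - k))) * u ^ s)"
    by (simp add: sum_distrib_right)
  also have "\<dots> = (\<Sum>s\<le>n. ((n + a) gchoose (n - s)) * ((n + a + b + s) gchoose s) * u ^ s)"
    by (simp add: A_def jacobiP_coeff_convolution)
  finally show ?thesis
    by (simp add: u_def)
qed

lemma jacobiP_swap_params:
  fixes a b x :: real
  shows "jacobiP n b a x = (-1) ^ n * jacobiP n a b (- x)"
proof -
  define T where "T k = ((n + a) gchoose (n - k)) * ((n + b) gchoose k) * ((x + 1) / 2) ^ k * ((x - 1) / 2) ^ (n - k)"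
    for k
  have "jacobiP n a b (- x) = (\<Sum>k\<le>n. (-1) ^ n * T k)"
    unfolding jacobiP_def
  proof (rule sum.cong[OF refl])
    fix k assume "k \<in> {..n}"
    hence "(-1::real) ^ n = (-1) ^ k * (-1) ^ (n - k)"
      by (simp flip: power_add)
    moreover have "(- x - 1) / 2 = (-1) * ((x + 1) / 2)" "(- x + 1) / 2 = (-1) * ((x - 1) / 2)"
      by simp_all
    ultimately show "((n + a) gchoose (n - k)) * ((n + b) gchoose k) * ((- x - 1) / 2) ^ k * ((- x + 1) / 2) ^ (n - k)
                     = (-1) ^ n * T k"
      unfolding T_def by (simp only: power_mult_distrib mult_ac)
  qed
  also have "(\<Sum>k\<le>n. T k) = (\<Sum>k\<le>n. T (n - k))"
    using sum.atLeastAtMost_rev[of T 0 n] by (simp add: atLeast0AtMost)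
  hence "(\<Sum>k\<le>n. (-1) ^ n * T k) = (-1) ^ n * jacobiP n b a x"
    unfolding jacobiP_def T_def sum_distrib_left[symmetric] by (simp add: mult_ac)
  finally show ?thesis by simp
qed

section \<open>Set integrals\<close>

lemma set_integral_nonneg:
  fixes f :: "'a \<Rightarrow> real"
  assumes "\<And>x. x \<in> S \<Longrightarrow> 0 \<le> f x"
  shows "0 \<le> (LINT x:S|M. f x)"
  unfolding set_lebesgue_integral_def
  using assms by (intro Bochner_Integration.integral_nonneg) (auto simp: indicator_def)

lemma nn_integral_indicator_eq_set_integral:
  fixes f :: "'a \<Rightarrow> real"
  assumes "set_integrable M S f" "\<And>x. x \<in> S \<Longrightarrow> 0 \<le> f x"
  shows "(\<integral>\<^sup>+x. ennreal (indicator S x * f x) \<partial>M) = ennreal (LINT x:S|M. f x)"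
proof -
  have "(\<integral>\<^sup>+x. ennreal (indicator S x * f x) \<partial>M) = ennreal (integral\<^sup>L M (\<lambda>x. indicator S x * f x))"
    using assms unfolding set_integrable_def
    by (intro nn_integral_eq_integral) (auto simp: indicator_def)
  thus ?thesis by (simp add: set_lebesgue_integral_def)
qed

lemma set_integral_eq_of_nn_integral:
  fixes f :: "'a \<Rightarrow> real"
  assumes "set_borel_measurable M S f" "\<And>x. x \<in> S \<Longrightarrow> 0 \<le> f x"
    and "(\<integral>\<^sup>+x. ennreal (indicator S x * f x) \<partial>M) = ennreal r" "0 \<le> r"
  shows "set_integrable M S f" "(LINT x:S|M. f x) = r"
proof -
  have "(\<lambda>x. indicator S x * f x) \<in> borel_measurable M"
    using assms(1) by (simp add: set_borel_measurable_def)
  from nn_integral_eq_integrable[OF this _ assms(4)] assms(2,3)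
  have "integrable M (\<lambda>x. indicator S x * f x) \<and> integral\<^sup>L M (\<lambda>x. indicator S x * f x) = r"
    by (auto simp: indicator_def)
  thus "set_integrable M S f" "(LINT x:S|M. f x) = r"
    by (simp_all add: set_integrable_def set_lebesgue_integral_def)
qed

lemma set_integral_eq_of_has_integral_nonneg:
  fixes f :: "real \<Rightarrow> real"
  assumes "set_borel_measurable lborel S f" "\<And>x. x \<in> S \<Longrightarrow> 0 \<le> f x" "(f has_integral I) S"
  shows "set_integrable lborel S f" "(LINT x:S|lborel. f x) = I"
proof -
  have "(\<integral>\<^sup>+x. ennreal (indicator S x * f x) \<partial>lborel) = ennreal I"
    using nn_integral_has_integral_lebesgue[OF assms(2,3)] by simp
  moreover have "0 \<le> I"
    using assms(3,2) by (rule has_integral_nonneg)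
  ultimately show "set_integrable lborel S f" "(LINT x:S|lborel. f x) = I"
    using set_integral_eq_of_nn_integral[OF assms(1,2)] by auto
qed

lemma set_integral_sum:
  fixes f :: "'i \<Rightarrow> 'a \<Rightarrow> real"
  assumes "\<And>i. i \<in> I \<Longrightarrow> set_integrable M A (f i)"
  shows "(LINT x:A|M. (\<Sum>i\<in>I. f i x)) = (\<Sum>i\<in>I. LINT x:A|M. f i x)"
  using assms unfolding set_lebesgue_integral_def set_integrable_def
  by (simp add: sum_distrib_left Bochner_Integration.integral_sum)

lemma set_integral_indicator_subset:
  fixes f :: "real \<Rightarrow> real"
  assumes "B \<subseteq> A"
  shows "set_integrable lborel A (\<lambda>y. indicator B y * f y) \<longleftrightarrow> set_integrable lborel B f"
    and "(LINT y:A|lborel. indicator B y * f y) = (LINT y:B|lborel. f y)"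
proof -
  have "(\<lambda>y. indicator A y *\<^sub>R (indicator B y * f y)) = (\<lambda>y. indicator B y *\<^sub>R f y)"
    using assms by (auto simp: indicator_def fun_eq_iff)
  thus "set_integrable lborel A (\<lambda>y. indicator B y * f y) \<longleftrightarrow> set_integrable lborel B f"
    and "(LINT y:A|lborel. indicator B y * f y) = (LINT y:B|lborel. f y)"
    by (simp_all add: set_integrable_def set_lebesgue_integral_def)
qed

lemma set_integral_one_minus:
  fixes F :: "real \<Rightarrow> real"
  shows "(LINT y:{l<..<r}|lborel. F y) = (LINT z:{1-r<..<1-l}|lborel. F (1 - z))"
    and "set_integrable lborel {l<..<r} F \<longleftrightarrow> set_integrable lborel {1-r<..<1-l} (\<lambda>z. F (1 - z))"
proof -
  have ind: "indicator {l<..<r} (1 - z) = (indicator {1-r<..<1-l} z :: real)" for z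
    by (auto simp: indicator_def)
  show "(LINT y:{l<..<r}|lborel. F y) = (LINT z:{1-r<..<1-l}|lborel. F (1 - z))"
    unfolding set_lebesgue_integral_def
    by (subst lborel_integral_real_affine[where c="-1" and t=1]) (simp_all add: ind)
  show "set_integrable lborel {l<..<r} F \<longleftrightarrow> set_integrable lborel {1-r<..<1-l} (\<lambda>z. F (1 - z))"
    unfolding set_integrable_def
    using lborel_integrable_real_affine_iff[where c="-1" and t=1 and f="\<lambda>y. indicator {l<..<r} y *\<^sub>R F y"]
    by (simp add: ind)
qed

lemma set_integral_swap_nonneg:
  fixes f :: "real \<Rightarrow> real \<Rightarrow> real"
  assumes meas: "(\<lambda>(x, y). indicator A x * indicator (B x) y * f x y) \<in> borel_measurable (lborel \<Otimes>\<^sub>M lborel)"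
    and region: "\<And>x y. x \<in> A \<and> y \<in> B x \<longleftrightarrow> y \<in> A' \<and> x \<in> B' y"
    and nonneg: "\<And>x y. x \<in> A \<Longrightarrow> y \<in> B x \<Longrightarrow> 0 \<le> f x y"
    and inner: "\<And>x. x \<in> A \<Longrightarrow> set_integrable lborel (B x) (f x)"
    and inner': "\<And>y. y \<in> A' \<Longrightarrow> set_integrable lborel (B' y) (\<lambda>x. f x y)"
    and value': "\<And>y. y \<in> A' \<Longrightarrow> (LINT x:B' y|lborel. f x y) = h y"
    and outer': "set_integrable lborel A' h"
  shows "set_integrable lborel A (\<lambda>x. LINT y:B x|lborel. f x y)"
    and "(LINT x:A|lborel. LINT y:B x|lborel. f x y) = (LINT y:A'|lborel. h y)"
proof -
  define F where "F x y = indicator A x * indicator (B x) y * f x y" for x y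
  have F_swap: "F x y = indicator A' y * indicator (B' y) x * f x y" for x y
    using region[of x y] by (auto simp: F_def indicator_def)
  have F_nonneg: "0 \<le> F x y" for x y
    using nonneg[of x y] by (auto simp: F_def indicator_def)
  have h_nonneg: "0 \<le> h y" if "y \<in> A'" for y
    using that region nonneg by (auto simp flip: value' intro!: set_integral_nonneg)
  have [measurable]: "(\<lambda>(x, y). F x y) \<in> borel_measurable (lborel \<Otimes>\<^sub>M lborel)"
    using meas by (simp add: F_def)
  have Tonelli: "(\<integral>\<^sup>+x. \<integral>\<^sup>+y. ennreal (F x y) \<partial>lborel \<partial>lborel)
                 = (\<integral>\<^sup>+y. \<integral>\<^sup>+x. ennreal (F x y) \<partial>lborel \<partial>lborel)"
    by (rule lborel_pair.Fubini'[symmetric]) measurable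
  have inner_x: "(\<integral>\<^sup>+y. ennreal (F x y) \<partial>lborel) = ennreal (indicator A x * (LINT y:B x|lborel. f x y))" for x
    by (cases "x \<in> A") (simp_all add: F_def nn_integral_indicator_eq_set_integral inner nonneg)
  have inner_y: "(\<integral>\<^sup>+x. ennreal (F x y) \<partial>lborel) = ennreal (indicator A' y * h y)" for y
  proof (cases "y \<in> A'")
    case True
    have "\<And>x. x \<in> B' y \<Longrightarrow> 0 \<le> f x y"
      using True region nonneg by blast
    thus ?thesis
      using True by (simp add: F_swap nn_integral_indicator_eq_set_integral inner' value')
  qed (simp add: F_swap)
  have "(\<integral>\<^sup>+x. ennreal (indicator A x * (LINT y:B x|lborel. f x y)) \<partial>lborel) =
        (\<integral>\<^sup>+y. \<integral>\<^sup>+x. ennreal (F x y) \<partial>lborel \<partial>lborel)"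
    by (simp add: inner_x flip: Tonelli)
  also have "\<dots> = ennreal (LINT y:A'|lborel. h y)"
    by (simp add: inner_y nn_integral_indicator_eq_set_integral outer' h_nonneg)
  finally have nn: "(\<integral>\<^sup>+x. ennreal (indicator A x * (LINT y:B x|lborel. f x y)) \<partial>lborel) =
                    ennreal (LINT y:A'|lborel. h y)" .
  have measurable: "set_borel_measurable lborel A (\<lambda>x. LINT y:B x|lborel. f x y)"
  proof -
    have "(\<lambda>x. LINT y|lborel. F x y) \<in> borel_measurable lborel"
      by measurable
    moreover have "indicator A x *\<^sub>R (LINT y:B x|lborel. f x y) = (LINT y|lborel. F x y)" for x
      by (simp add: F_def set_lebesgue_integral_def mult.assoc)
    ultimately show ?thesis
      by (simp add: set_borel_measurable_def)
  qed
  have inner_nonneg: "0 \<le> (LINT y:B x|lborel. f x y)" if "x \<in> A" for x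
    using that nonneg by (intro set_integral_nonneg)
  have "0 \<le> (LINT y:A'|lborel. h y)"
    using h_nonneg by (rule set_integral_nonneg)
  from set_integral_eq_of_nn_integral[OF measurable inner_nonneg nn this]
  show "set_integrable lborel A (\<lambda>x. LINT y:B x|lborel. f x y)"
    and "(LINT x:A|lborel. LINT y:B x|lborel. f x y) = (LINT y:A'|lborel. h y)"
    by simp_all
qed

lemma set_integral_powr_sub_const:
  fixes c y a b :: real
  assumes c: "-1 < c" and "y \<le> a" "a \<le> b"
  shows "set_integrable lborel {a<..<b} (\<lambda>\<tau>. (\<tau> - y) powr c)"
    and "(LINT \<tau>:{a<..<b}|lborel. (\<tau> - y) powr c) = ((b - y) powr (c + 1) - (a - y) powr (c + 1)) / (c + 1)"
proof -
  define F where "F \<tau> = (\<tau> - y) powr (c + 1) / (c + 1)" for \<tau>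
  have "((\<lambda>\<tau>. (\<tau> - y) powr c) has_integral (F b - F a)) {a..b}"
  proof (rule fundamental_theorem_of_calculus_interior[OF \<open>a \<le> b\<close>])
    show "continuous_on {a..b} F"
      unfolding F_def using assms by (intro continuous_intros continuous_on_powr') auto
    fix x assume "x \<in> {a<..<b}"
    hence "0 < x - y" using assms by auto
    thus "(F has_vector_derivative (x - y) powr c) (at x)"
      using c unfolding F_def has_real_derivative_iff_has_vector_derivative[symmetric]
      by (auto intro!: derivative_eq_intros simp: powr_diff)
  qed
  hence "((\<lambda>\<tau>. (\<tau> - y) powr c) has_integral ((b - y) powr (c + 1) - (a - y) powr (c + 1)) / (c + 1)) {a<..<b}"
    by (simp add: F_def has_integral_Icc_iff_Ioo diff_divide_distrib)
  moreover have "set_borel_measurable lborel {a<..<b} (\<lambda>\<tau>. (\<tau> - y) powr c)"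
    unfolding set_borel_measurable_def by measurable
  ultimately show "set_integrable lborel {a<..<b} (\<lambda>\<tau>. (\<tau> - y) powr c)"
    and "(LINT \<tau>:{a<..<b}|lborel. (\<tau> - y) powr c) = ((b - y) powr (c + 1) - (a - y) powr (c + 1)) / (c + 1)"
    using set_integral_eq_of_has_integral_nonneg by auto
qed

lemma set_integral_powr_const_sub:
  fixes c y a b :: real
  assumes c: "-1 < c" and "b \<le> y" "a \<le> b"
  shows "set_integrable lborel {a<..<b} (\<lambda>\<tau>. (y - \<tau>) powr c)"
    and "(LINT \<tau>:{a<..<b}|lborel. (y - \<tau>) powr c) = ((y - a) powr (c + 1) - (y - b) powr (c + 1)) / (c + 1)"
proof -
  define F where "F \<tau> = - ((y - \<tau>) powr (c + 1) / (c + 1))" for \<tau>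
  have "((\<lambda>\<tau>. (y - \<tau>) powr c) has_integral (F b - F a)) {a..b}"
  proof (rule fundamental_theorem_of_calculus_interior[OF \<open>a \<le> b\<close>])
    show "continuous_on {a..b} F"
      unfolding F_def using assms by (intro continuous_intros continuous_on_powr') auto
    fix x assume "x \<in> {a<..<b}"
    hence "0 < y - x" using assms by auto
    thus "(F has_vector_derivative (y - x) powr c) (at x)"
      using c unfolding F_def has_real_derivative_iff_has_vector_derivative[symmetric]
      by (auto intro!: derivative_eq_intros simp: powr_diff)
  qed
  hence "((\<lambda>\<tau>. (y - \<tau>) powr c) has_integral ((y - a) powr (c + 1) - (y - b) powr (c + 1)) / (c + 1)) {a<..<b}"
    by (simp add: F_def has_integral_Icc_iff_Ioo diff_divide_distrib)
  moreover have "set_borel_measurable lborel {a<..<b} (\<lambda>\<tau>. (y - \<tau>) powr c)"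
    unfolding set_borel_measurable_def by measurable
  ultimately show "set_integrable lborel {a<..<b} (\<lambda>\<tau>. (y - \<tau>) powr c)"
    and "(LINT \<tau>:{a<..<b}|lborel. (y - \<tau>) powr c) = ((y - a) powr (c + 1) - (y - b) powr (c + 1)) / (c + 1)"
    using set_integral_eq_of_has_integral_nonneg by auto
qed

lemma set_integral_poly:
  fixes a :: "nat \<Rightarrow> real" and t :: real
  assumes t: "0 < t"
  shows "set_integrable lborel {0<..<t} (\<lambda>\<tau>. \<Sum>j\<le>m. a j * \<tau> ^ j)"
    and "(LINT \<tau>:{0<..<t}|lborel. (\<Sum>j\<le>m. a j * \<tau> ^ j)) = (\<Sum>j\<le>m. a j * t ^ (j + 1) / (j + 1))"
proof -
  have "continuous_on {0..t} (\<lambda>\<tau>. \<Sum>j\<le>m. a j * \<tau> ^ j)"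
    by (intro continuous_intros)
  hence "set_integrable lborel {0..t} (\<lambda>\<tau>. \<Sum>j\<le>m. a j * \<tau> ^ j)"
    unfolding set_integrable_def by (rule borel_integrable_compact[rotated]) auto
  thus int: "set_integrable lborel {0<..<t} (\<lambda>\<tau>. \<Sum>j\<le>m. a j * \<tau> ^ j)"
    by (rule set_integrable_subset) auto
  define F where "F \<tau> = (\<Sum>j\<le>m. a j * \<tau> ^ (j + 1) / (j + 1))" for \<tau> :: real
  have "((\<lambda>\<tau>. \<Sum>j\<le>m. a j * \<tau> ^ j) has_integral (F t - F 0)) {0..t}"
  proof (rule fundamental_theorem_of_calculus)
    show "0 \<le> t" using t by simp
    fix x assume "x \<in> {0..t}"
    have "(F has_field_derivative (\<Sum>j\<le>m. a j * x ^ j)) (at x within {0..t})"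
      unfolding F_def by (rule derivative_eq_intros refl | simp add: mult_ac)+
    thus "(F has_vector_derivative (\<Sum>j\<le>m. a j * x ^ j)) (at x within {0..t})"
      by (simp add: has_real_derivative_iff_has_vector_derivative)
  qed
  hence "((\<lambda>\<tau>. \<Sum>j\<le>m. a j * \<tau> ^ j) has_integral F t) {0<..<t}"
    by (simp add: F_def has_integral_Icc_iff_Ioo)
  thus "(LINT \<tau>:{0<..<t}|lborel. (\<Sum>j\<le>m. a j * \<tau> ^ j)) = (\<Sum>j\<le>m. a j * t ^ (j + 1) / (j + 1))"
    using set_borel_integral_eq_integral(2)[OF int] by (simp add: F_def integral_unique)
qed

lemma set_integral_binom_conv:
  assumes "0 < t"
  shows "set_integrable lborel {0<..<t} (binom_conv a c m)"
    and "(LINT \<tau>:{0<..<t}|lborel. binom_conv a c m \<tau>)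
         = (\<Sum>j\<le>m. (a gchoose (m - j)) * (c gchoose j) * t ^ (j + 1) / (j + 1))"
  using set_integral_poly[OF assms, of "\<lambda>j. (a gchoose (m - j)) * (c gchoose j)" m]
  by (simp_all add: binom_conv_def[abs_def] mult.assoc)

lemma binom_conv_Suc:
  assumes "0 < t"
  shows "binom_conv (a + 1) c (Suc m) t
         = (1 - t) * binom_conv a c m t + (c + 1) * (LINT \<tau>:{0<..<t}|lborel. binom_conv a c m \<tau>)
           + (a gchoose Suc m)"
  unfolding set_integral_binom_conv(2)[OF assms] by (rule binom_conv_Suc_sum)

lemma set_integral_Beta:
  fixes a b :: real
  assumes "0 < a" "0 < b"
  shows "set_integrable lborel {0<..<1} (\<lambda>y. y powr (a - 1) * (1 - y) powr (b - 1))"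
    and "(LINT y:{0<..<1}|lborel. y powr (a - 1) * (1 - y) powr (b - 1)) = Beta a b"
proof -
  show int: "set_integrable lborel {0<..<1} (\<lambda>y. y powr (a - 1) * (1 - y) powr (b - 1))"
    by (rule set_integrable_subset[OF integrable_Beta[OF assms]]) auto
  have "((\<lambda>y. y powr (a - 1) * (1 - y) powr (b - 1)) has_integral Beta a b) {0<..<1}"
    using has_integral_Beta_real[OF assms] by (simp add: has_integral_Icc_iff_Ioo)
  thus "(LINT y:{0<..<1}|lborel. y powr (a - 1) * (1 - y) powr (b - 1)) = Beta a b"
    using set_borel_integral_eq_integral(2)[OF int] by (simp add: integral_unique)
qed

lemma einterval_0_1: "einterval 0 1 = {0::real<..<1}"
  by (auto simp: einterval_def zero_ereal_def one_ereal_def)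

lemma einterval_0_infinity: "einterval 0 \<infinity> = {0::real<..}"
  by (auto simp: einterval_def zero_ereal_def)

section \<open>Stieltjes transforms of powers\<close>

lemma Beta_complement: "Beta (b + 1) (- b) = - pi / sin (pi * b)"
proof -
  have "Beta (b + 1) (- b) = Gamma (b + 1) * Gamma (1 - (b + 1))"
    by (simp add: Beta_def)
  also have "\<dots> = pi / sin (pi * (b + 1))"
    by (rule Gamma_reflection_real)
  also have "sin (pi * (b + 1)) = - sin (pi * b)"
    by (simp add: distrib_left)
  finally show ?thesis by simp
qed

lemma powr_div_add_substitution:
  fixes b s y :: real
  assumes s: "0 < s" and y: "0 < y" "y < 1"
  shows "(s * y / (1 - y)) powr b / (s * y / (1 - y) + s) * (s / (1 - y)^2)
         = s powr b * (y powr ((b + 1) - 1) * (1 - y) powr ((-b) - 1))"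
proof -
  have y1: "0 < 1 - y" using y by simp
  have "s * y / (1 - y) + s = s / (1 - y)"
    using y1 by (simp add: field_simps)
  moreover have "(s * y / (1 - y)) powr b = s powr b * y powr b / (1 - y) powr b"
    using s y y1 by (simp add: powr_divide powr_mult)
  ultimately have "(s * y / (1 - y)) powr b / (s * y / (1 - y) + s) * (s / (1 - y)^2)
        = (s powr b * y powr b / (1 - y) powr b) / (s / (1 - y)) * (s / (1 - y)^2)"
    by simp
  also have "\<dots> = s powr b * y powr b / ((1 - y) powr b * (1 - y))"
    using y1 s by (simp add: divide_simps power2_eq_square)
  also have "\<dots> = s powr b * (y powr ((b + 1) - 1) * (1 - y) powr ((-b) - 1))"
    using y y1 by (simp add: powr_diff powr_minus_divide)
  finally show ?thesis .
qed

lemma set_integral_powr_div_add: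
  fixes b s :: real
  assumes b: "-1 < b" "b < 0" and s: "0 < s"
  shows "set_integrable lborel {0<..} (\<lambda>u. u powr b / (u + s))"
    and "(LINT u:{0<..}|lborel. u powr b / (u + s)) = - pi * s powr b / sin (pi * b)"
proof -
  \<comment> \<open>\<open>u = s y / (1 - y)\<close> turns the integral into \<open>s powr b * Beta (b + 1) (- b)\<close>\<close>
  define g where "g y = s * y / (1 - y)" for y :: real
  define g' where "g' y = s / (1 - y)^2" for y :: real
  define f where "f u = u powr b / (u + s)" for u :: real
  define B where "B y = y powr ((b + 1) - 1) * (1 - y) powr ((-b) - 1)" for y :: real
  have fg: "f (g y) * g' y = s powr b * B y" if "0 < y" "y < 1" for y
    using powr_div_add_substitution[OF s that] by (simp add: f_def g_def g'_def B_def)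
  have Beta: "set_integrable lborel {0<..<1} B" "(LINT y:{0<..<1}|lborel. B y) = Beta (b + 1) (-b)"
    using set_integral_Beta[of "b + 1" "-b"] b unfolding B_def[abs_def] by simp_all
  have x01: "0 < x" "x < 1" if "0 < ereal x" "ereal x < 1" for x
    using that by (simp_all add: zero_ereal_def one_ereal_def)
  have deriv: "(g has_real_derivative g' x) (at x)" if "0 < ereal x" "ereal x < 1" for x
    using x01[OF that] unfolding g_def g'_def
    by (auto intro!: derivative_eq_intros simp: field_simps power2_eq_square)
  have g_pos: "0 < g x" if "0 < ereal x" "ereal x < 1" for x
    using x01[OF that] s by (simp add: g_def)
  have cont_f: "isCont f (g x)" and f_nonneg: "0 \<le> f (g x)" if "0 < ereal x" "ereal x < 1" for x
    using g_pos[OF that] s unfolding f_def by (auto intro!: continuous_intros)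
  have cont_g': "isCont g' x" if "0 < ereal x" "ereal x < 1" for x
    using x01[OF that] unfolding g'_def by (intro continuous_intros) auto
  have g'_nonneg: "0 \<le> g' x" for x
    using s by (simp add: g'_def)
  have "(g \<longlongrightarrow> 0) (at_right 0)"
    unfolding g_def by real_asymp
  hence lim0: "((ereal \<circ> g \<circ> real_of_ereal) \<longlongrightarrow> 0) (at_right 0)"
    by (simp add: zero_ereal_def ereal_tendsto_simps)
  have "filterlim g at_top (at_left 1)"
    unfolding g_def using s by real_asymp
  hence lim1: "((ereal \<circ> g \<circ> real_of_ereal) \<longlongrightarrow> \<infinity>) (at_left 1)"
    by (simp add: one_ereal_def ereal_tendsto_simps)
  have "set_integrable lborel (einterval 0 1) (\<lambda>x. f (g x) * g' x)"
    unfolding einterval_0_1 using set_integrable_mult_right[OF Beta(1), of "s powr b"]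
    by (rule set_integrable_cong[THEN iffD1, rotated -1]) (auto simp: fg)
  note sub = interval_integral_substitution_nonneg[where a=0 and b=1 and f=f and g=g and g'=g'
      and A=0 and B=\<infinity>, OF _ deriv cont_f cont_g' f_nonneg g'_nonneg lim0 lim1 this]
  show "set_integrable lborel {0<..} (\<lambda>u. u powr b / (u + s))"
    using sub(1) by (simp add: f_def[abs_def] einterval_0_infinity)
  have "(LINT u:{0<..}|lborel. u powr b / (u + s)) = (LINT u:{0<..}|lborel. f u)"
    by (simp add: f_def)
  also have "\<dots> = (LINT y:{0<..<1}|lborel. f (g y) * g' y)"
    using sub(2) by (simp add: interval_lebesgue_integral_def einterval_0_infinity einterval_0_1)
  also have "\<dots> = (LINT y:{0<..<1}|lborel. s powr b * B y)"
    by (rule set_lebesgue_integral_cong) (auto simp: fg)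
  also have "\<dots> = s powr b * Beta (b + 1) (- b)"
    by (simp add: Beta(2))
  finally show "(LINT u:{0<..}|lborel. u powr b / (u + s)) = - pi * s powr b / sin (pi * b)"
    by (simp add: Beta_complement)
qed

definition stieltjes_powr :: "real \<Rightarrow> real \<Rightarrow> real \<Rightarrow> real" where
  "stieltjes_powr a b s = (LINT u:{0<..}|lborel. u powr a * (1 + u) powr b / (u + s))"

lemma set_integrable_stieltjes_powr:
  fixes a b s :: real
  assumes a: "-1 < a" "a < 0" and b: "b \<le> 0" and s: "0 < s"
  shows "set_integrable lborel {0<..} (\<lambda>u. u powr a * (1 + u) powr b / (u + s))"
proof (rule set_integrable_bound[OF set_integral_powr_div_add(1)[OF a s]])
  show "set_borel_measurable lborel {0<..} (\<lambda>u. u powr a * (1 + u) powr b / (u + s))"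
    unfolding set_borel_measurable_def by measurable
  show "AE u in lborel. u \<in> {0<..} \<longrightarrow> norm (u powr a * (1 + u) powr b / (u + s)) \<le> norm (u powr a / (u + s))"
  proof (rule AE_I2, intro impI)
    fix u :: real assume u: "u \<in> {0<..}"
    have "(1 + u) powr b \<le> (1 + u) powr 0"
      using u b by (intro powr_mono) auto
    thus "norm (u powr a * (1 + u) powr b / (u + s)) \<le> norm (u powr a / (u + s))"
      using u s by (auto simp: abs_mult divide_simps intro!: mult_left_le)
  qed
qed

lemma set_integral_powr_div_prod:
  fixes nu s X :: real
  assumes nu: "-1 < nu" "nu < 0" and s: "0 < s" and X: "s < X"
  shows "set_integrable lborel {0<..} (\<lambda>u. u powr nu / ((u + X) * (u + s)))"
    and "(LINT u:{0<..}|lborel. u powr nu / ((u + X) * (u + s)))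
         = pi / (- sin (pi * nu)) * (s powr nu - X powr nu) / (X - s)"
proof -
  have "0 < X" using s X by simp
  note I_s = set_integral_powr_div_add[OF nu s] and I_X = set_integral_powr_div_add[OF nu \<open>0 < X\<close>]
  have partial_fractions: "u powr nu / ((u + X) * (u + s)) = (u powr nu / (u + s) - u powr nu / (u + X)) / (X - s)"
    if "u \<in> {0<..}" for u
  proof -
    have "u + s \<noteq> 0" "u + X \<noteq> 0" "X - s \<noteq> 0"
      using that s X by auto
    hence "u powr nu / (u + s) - u powr nu / (u + X) = u powr nu * (X - s) / ((u + X) * (u + s))"
      by (simp add: diff_frac_eq algebra_simps)
    thus ?thesis
      using \<open>X - s \<noteq> 0\<close> by simp
  qed
  have "set_integrable lborel {0<..} (\<lambda>u. (u powr nu / (u + s) - u powr nu / (u + X)) / (X - s))"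
    using set_integral_diff(1)[OF I_s(1) I_X(1)] by (rule set_integrable_divide)
  thus "set_integrable lborel {0<..} (\<lambda>u. u powr nu / ((u + X) * (u + s)))"
    by (rule set_integrable_cong[THEN iffD1, rotated -1]) (auto simp: partial_fractions)
  have "(LINT u:{0<..}|lborel. u powr nu / ((u + X) * (u + s))) =
        (LINT u:{0<..}|lborel. (u powr nu / (u + s) - u powr nu / (u + X)) / (X - s))"
    by (rule set_lebesgue_integral_cong) (auto simp: partial_fractions)
  also have "\<dots> = ((- pi * s powr nu / sin (pi * nu)) - (- pi * X powr nu / sin (pi * nu))) / (X - s)"
    using set_integral_diff(2)[OF I_s(1) I_X(1)] I_s(2) I_X(2) by simp
  also have "\<dots> = pi / (- sin (pi * nu)) * (s powr nu - X powr nu) / (X - s)"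
    using sin_pi_mult_neg[OF nu] X by (simp add: field_simps)
  finally show "(LINT u:{0<..}|lborel. u powr nu / ((u + X) * (u + s)))
         = pi / (- sin (pi * nu)) * (s powr nu - X powr nu) / (X - s)" .
qed

lemma stieltjes_powr_swap:
  fixes mu nu s :: real
  assumes mu: "-1 < mu" "mu < 0" and nu: "-1 < nu" "nu < 0" and s: "0 < s" "s < 1"
  shows "set_integrable lborel {0<..} (\<lambda>x. x powr mu * (s powr nu - (1 + x) powr nu) / (x + 1 - s))"
    and "sin (pi * mu) * (LINT x:{0<..}|lborel. x powr mu * (s powr nu - (1 + x) powr nu) / (x + 1 - s))
         = sin (pi * nu) * stieltjes_powr nu mu s"
proof -
  \<comment> \<open>both sides are iterated integrals of \<open>x powr mu * u powr nu / ((u + x + 1) * (u + s))\<close>\<close>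
  define f where "f x u = x powr mu * u powr nu / ((u + (x + 1)) * (u + s))" for x u :: real
  define D where "D x = x powr mu * (s powr nu - (1 + x) powr nu) / (x + 1 - s)" for x :: real
  define C_mu where "C_mu = pi / (- sin (pi * mu))"
  define C_nu where "C_nu = pi / (- sin (pi * nu))"
  have sin_neg: "sin (pi * mu) < 0" "sin (pi * nu) < 0"
    using sin_pi_mult_neg mu nu by auto
  have meas: "(\<lambda>(x, u). indicator {0<..} x * indicator {0<..} u * f x u) \<in> borel_measurable (lborel \<Otimes>\<^sub>M lborel)"
    unfolding f_def by measurable
  have nonneg: "0 \<le> f x u" if "x \<in> {0<..}" "u \<in> {0<..}" for x u
    using that s by (simp add: f_def)
  have int_x: "set_integrable lborel {0<..} (f x)"
    and inner_x: "(LINT u:{0<..}|lborel. f x u) = C_nu * D x" if "x \<in> {0<..}" for x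
  proof -
    have "s < x + 1" using that s by simp
    note prod = set_integral_powr_div_prod[OF nu s(1) this]
    have f_eq: "f x = (\<lambda>u. x powr mu * (u powr nu / ((u + (x + 1)) * (u + s))))"
      by (simp add: f_def fun_eq_iff)
    show "set_integrable lborel {0<..} (f x)"
      unfolding f_eq using prod(1) by (rule set_integrable_mult_right)
    show "(LINT u:{0<..}|lborel. f x u) = C_nu * D x"
      unfolding f_eq set_integral_mult_right prod(2) by (simp add: C_nu_def D_def add_ac)
  qed
  have int_u: "set_integrable lborel {0<..} (\<lambda>x. f x u)"
    and inner_u: "(LINT x:{0<..}|lborel. f x u) = C_mu * (u powr nu * (1 + u) powr mu / (u + s))"
    if "u \<in> {0<..}" for u
  proof -
    have "0 < 1 + u" using that by simp
    note K = set_integral_powr_div_add[OF mu this]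
    have f_eq: "(\<lambda>x. f x u) = (\<lambda>x. u powr nu / (u + s) * (x powr mu / (x + (1 + u))))"
      by (simp add: f_def fun_eq_iff algebra_simps)
    show "set_integrable lborel {0<..} (\<lambda>x. f x u)"
      unfolding f_eq using K(1) by (rule set_integrable_mult_right)
    show "(LINT x:{0<..}|lborel. f x u) = C_mu * (u powr nu * (1 + u) powr mu / (u + s))"
      unfolding f_eq set_integral_mult_right K(2) by (simp add: C_mu_def mult_ac)
  qed
  have outer: "set_integrable lborel {0<..} (\<lambda>u. C_mu * (u powr nu * (1 + u) powr mu / (u + s)))"
    using nu mu s by (intro set_integrable_mult_right set_integrable_stieltjes_powr) auto
  have region: "x \<in> {0<..} \<and> u \<in> {0<..} \<longleftrightarrow> u \<in> {0<..} \<and> x \<in> {0::real<..}" for x u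
    by blast
  note swap = set_integral_swap_nonneg[OF meas region nonneg int_x int_u inner_u outer]
  have "set_integrable lborel {0<..} (\<lambda>x. C_nu * D x)"
    using swap(1) by (rule set_integrable_cong[THEN iffD1, rotated -1]) (auto simp: inner_x)
  moreover have "C_nu \<noteq> 0"
    using sin_neg by (simp add: C_nu_def)
  ultimately show "set_integrable lborel {0<..} D"
    by simp
  have "C_nu * (LINT x:{0<..}|lborel. D x) = (LINT x:{0<..}|lborel. LINT u:{0<..}|lborel. f x u)"
    unfolding set_integral_mult_right[symmetric] by (rule set_lebesgue_integral_cong) (auto simp: inner_x)
  also have "\<dots> = (LINT u:{0<..}|lborel. C_mu * (u powr nu * (1 + u) powr mu / (u + s)))"
    by (rule swap(2))
  also have "\<dots> = C_mu * stieltjes_powr nu mu s"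
    unfolding stieltjes_powr_def by (rule set_integral_mult_right)
  finally have "C_nu * (LINT x:{0<..}|lborel. D x) = C_mu * stieltjes_powr nu mu s" .
  thus "sin (pi * mu) * (LINT x:{0<..}|lborel. D x) = sin (pi * nu) * stieltjes_powr nu mu s"
    using sin_neg by (simp add: C_mu_def C_nu_def field_simps)
qed

lemma stieltjes_powr_reflection:
  fixes mu nu s :: real
  assumes mu: "-1 < mu" "mu < 0" and nu: "-1 < nu" "nu < 0" and s: "0 < s" "s < 1"
  shows "sin (pi * nu) * stieltjes_powr nu mu s + sin (pi * mu) * stieltjes_powr mu nu (1 - s)
         = - pi * s powr nu * (1 - s) powr mu"
proof -
  define D where "D x = x powr mu * (s powr nu - (1 + x) powr nu) / (x + 1 - s)" for x :: real
  have "0 < 1 - s" using s by simp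
  note swap = stieltjes_powr_swap[OF mu nu s, folded D_def]
  note K = set_integral_powr_div_add[OF mu \<open>0 < 1 - s\<close>]
  have int: "set_integrable lborel {0<..} (\<lambda>u. u powr mu * (1 + u) powr nu / (u + (1 - s)))"
    using mu nu \<open>0 < 1 - s\<close> by (intro set_integrable_stieltjes_powr) auto
  have "(LINT x:{0<..}|lborel. D x) + stieltjes_powr mu nu (1 - s)
        = (LINT x:{0<..}|lborel. D x + x powr mu * (1 + x) powr nu / (x + (1 - s)))"
    unfolding stieltjes_powr_def using swap(1) int by (rule set_integral_add(2)[symmetric])
  also have "\<dots> = (LINT x:{0<..}|lborel. s powr nu * (x powr mu / (x + (1 - s))))"
    by (rule set_lebesgue_integral_cong) (auto simp: D_def add_divide_distrib[symmetric] algebra_simps)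
  also have "\<dots> = s powr nu * (- pi * (1 - s) powr mu / sin (pi * mu))"
    unfolding set_integral_mult_right K(2) ..
  finally have sum: "(LINT x:{0<..}|lborel. D x) + stieltjes_powr mu nu (1 - s)
                     = s powr nu * (- pi * (1 - s) powr mu / sin (pi * mu))" .
  have "sin (pi * mu) < 0"
    using sin_pi_mult_neg[OF mu] .
  thus ?thesis
    using swap(2) sum by (simp add: field_simps)
qed

lemma left_kernel_substitution:
  fixes a b t u :: real
  assumes t: "0 < t" "t < 1" and u: "0 < u"
  defines "g \<equiv> t * u / (1 - t + u)"
  shows "(t - g) powr (-1 - a - b) * g powr a * (1 - g) powr b * (t * (1 - t) / (1 - t + u)^2)
         = t powr (-b) * (1 - t) powr (-a) * (u powr a * (1 + u) powr b / (u + (1 - t)))"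
proof -
  define k where "k = 1 - t"
  define q where "q = k + u"
  have k: "0 < k" "t + k = 1" and q: "0 < q"
    using t u by (auto simp: k_def q_def)
  have collect: "x powr p * x powr r * x = x powr (p + r + 1)" if "0 < x" for x p r :: real
    using that by (simp add: powr_add)
  have e1: "t - g = t * k / q" and e2: "1 - g = k * (1 + u) / q"
    using k q by (simp_all add: g_def k_def q_def field_simps)
  have e3: "g = t * u / q"
    by (simp add: g_def k_def q_def)
  have "(t - g) powr (-1 - a - b) * g powr a * (1 - g) powr b * (t * k / q^2)
        = (t * k / q) powr (-1 - a - b) * (t * u / q) powr a * (k * (1 + u) / q) powr b * (t * k / q^2)"
    unfolding e1 e2 by (simp only: e3)
  also have "\<dots> = (t powr (-1 - a - b) * k powr (-1 - a - b) / q powr (-1 - a - b))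
          * (t powr a * u powr a / q powr a) * (k powr b * (1 + u) powr b / q powr b) * (t * k / q^2)"
    using t u k q by (simp add: powr_divide powr_mult)
  also have "\<dots> = (t powr (-1 - a - b) * t powr a * t) * (k powr (-1 - a - b) * k powr b * k)
          * (u powr a * (1 + u) powr b) / ((q powr (-1 - a - b) * q powr a * q powr b) * q^2)"
    by (simp add: field_simps)
  also have "t powr (-1 - a - b) * t powr a * t = t powr (-b)"
    using collect[OF t(1)] by simp
  also have "k powr (-1 - a - b) * k powr b * k = k powr (-a)"
    using collect[OF k(1)] by simp
  also have "(q powr (-1 - a - b) * q powr a * q powr b) * q^2 = q"
    using q by (simp add: powr_add [symmetric] powr_minus power2_eq_square field_simps)
  finally show ?thesis
    by (simp add: k_def q_def add.commute)
qed

lemma left_kernel_integral: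
  fixes a b t :: real
  assumes a: "-1 < a" "a < 0" and b: "b < 0" and t: "0 < t" "t < 1"
  shows "set_integrable lborel {0<..<t} (\<lambda>y. (t - y) powr (-1 - a - b) * y powr a * (1 - y) powr b)"
    and "(LINT y:{0<..<t}|lborel. (t - y) powr (-1 - a - b) * y powr a * (1 - y) powr b)
         = t powr (-b) * (1 - t) powr (-a) * stieltjes_powr a b (1 - t)"
proof -
  define k where "k = 1 - t"
  have k: "0 < k" using t by (simp add: k_def)
  define g where "g u = t * u / (k + u)" for u :: real
  define g' where "g' u = t * k / (k + u)^2" for u :: real
  define f where "f y = (t - y) powr (-1 - a - b) * y powr a * (1 - y) powr b" for y :: real
  define S where "S u = u powr a * (1 + u) powr b / (u + k)" for u :: real
  have fg: "f (g u) * g' u = t powr (-b) * k powr (-a) * S u" if "0 < u" for u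
    using left_kernel_substitution[OF t that, of a b] by (simp add: f_def g_def g'_def S_def k_def)
  have S_int: "set_integrable lborel {0<..} S"
    unfolding S_def[abs_def] using a b k by (intro set_integrable_stieltjes_powr) auto
  have x0: "0 < x" if "0 < ereal x" for x
    using that by (simp add: zero_ereal_def)
  have g_bounds: "0 < g x" "g x < t" if "0 < ereal x" for x
    using x0[OF that] t k by (auto simp: g_def field_simps)
  have deriv: "(g has_real_derivative g' x) (at x)" if "0 < ereal x" "ereal x < \<infinity>" for x
    using x0[OF that(1)] k unfolding g_def g'_def
    by (auto intro!: derivative_eq_intros simp: field_simps power2_eq_square)
  have cont_f: "isCont f (g x)" and f_nonneg: "0 \<le> f (g x)" if "0 < ereal x" "ereal x < \<infinity>" for x
    using g_bounds[OF that(1)] t unfolding f_def by (auto intro!: continuous_intros)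
  have cont_g': "isCont g' x" if "0 < ereal x" "ereal x < \<infinity>" for x
    using x0[OF that(1)] k unfolding g'_def by (intro continuous_intros) auto
  have g'_nonneg: "0 \<le> g' x" if "0 \<le> ereal x" for x
    using that t k by (simp add: g'_def zero_ereal_def)
  have "(g \<longlongrightarrow> 0) (at_right 0)"
    unfolding g_def using k by real_asymp
  hence lim0: "((ereal \<circ> g \<circ> real_of_ereal) \<longlongrightarrow> 0) (at_right 0)"
    by (simp add: zero_ereal_def ereal_tendsto_simps)
  have "(g \<longlongrightarrow> t) at_top"
    unfolding g_def using k by real_asymp
  hence lim_inf: "((ereal \<circ> g \<circ> real_of_ereal) \<longlongrightarrow> ereal t) (at_left \<infinity>)"
    by (simp add: ereal_tendsto_simps)
  have "set_integrable lborel (einterval 0 \<infinity>) (\<lambda>u. f (g u) * g' u)"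
    unfolding einterval_0_infinity using set_integrable_mult_right[OF S_int, of "t powr (-b) * k powr (-a)"]
    by (rule set_integrable_cong[THEN iffD1, rotated -1]) (auto simp: fg)
  note sub = interval_integral_substitution_nonneg[where a=0 and b=\<infinity> and f=f and g=g and g'=g'
      and A=0 and B="ereal t", OF _ deriv cont_f cont_g' f_nonneg g'_nonneg lim0 lim_inf this]
  have et: "einterval 0 (ereal t) = {0<..<t}"
    by (auto simp: einterval_def zero_ereal_def)
  show "set_integrable lborel {0<..<t} (\<lambda>y. (t - y) powr (-1 - a - b) * y powr a * (1 - y) powr b)"
    using sub(1) by (simp add: et f_def[abs_def])
  have "(LINT y:{0<..<t}|lborel. (t - y) powr (-1 - a - b) * y powr a * (1 - y) powr b)
        = (LINT y:{0<..<t}|lborel. f y)"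
    by (simp add: f_def)
  also have "\<dots> = (LINT u:{0<..}|lborel. f (g u) * g' u)"
    using sub(2) t by (simp add: interval_lebesgue_integral_def et einterval_0_infinity)
  also have "\<dots> = (LINT u:{0<..}|lborel. t powr (-b) * k powr (-a) * S u)"
    by (rule set_lebesgue_integral_cong) (auto simp: fg)
  also have "\<dots> = t powr (-b) * (1 - t) powr (-a) * stieltjes_powr a b (1 - t)"
    unfolding set_integral_mult_right by (simp add: stieltjes_powr_def S_def k_def)
  finally show "(LINT y:{0<..<t}|lborel. (t - y) powr (-1 - a - b) * y powr a * (1 - y) powr b)
         = t powr (-b) * (1 - t) powr (-a) * stieltjes_powr a b (1 - t)" .
qed

lemma right_kernel_integral:
  fixes a b t :: real
  assumes a: "a < 0" and b: "-1 < b" "b < 0" and t: "0 < t" "t < 1"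
  shows "set_integrable lborel {t<..<1} (\<lambda>y. (y - t) powr (-1 - a - b) * y powr a * (1 - y) powr b)"
    and "(LINT y:{t<..<1}|lborel. (y - t) powr (-1 - a - b) * y powr a * (1 - y) powr b)
         = t powr (-b) * (1 - t) powr (-a) * stieltjes_powr b a t"
proof -
  have t': "0 < 1 - t" "1 - t < 1" using t by auto
  note left = left_kernel_integral[OF b a t']
  have reflect: "(1 - z - t) powr (-1 - a - b) * (1 - z) powr a * (1 - (1 - z)) powr b
                 = (1 - t - z) powr (-1 - b - a) * z powr b * (1 - z) powr a" for z
    by (simp add: algebra_simps)
  have "set_integrable lborel {1-1<..<1-t} (\<lambda>z. (1 - z - t) powr (-1 - a - b) * (1 - z) powr a * (1 - (1 - z)) powr b)"
    unfolding reflect using left(1) by simp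
  thus "set_integrable lborel {t<..<1} (\<lambda>y. (y - t) powr (-1 - a - b) * y powr a * (1 - y) powr b)"
    by (rule set_integral_one_minus(2)[THEN iffD2])
  have "(LINT y:{t<..<1}|lborel. (y - t) powr (-1 - a - b) * y powr a * (1 - y) powr b) =
        (LINT z:{1-1<..<1-t}|lborel. (1 - z - t) powr (-1 - a - b) * (1 - z) powr a * (1 - (1 - z)) powr b)"
    by (rule set_integral_one_minus(1))
  also have "\<dots> = (LINT z:{0<..<1-t}|lborel. (1 - t - z) powr (-1 - b - a) * z powr b * (1 - z) powr a)"
    unfolding reflect by simp
  finally show "(LINT y:{t<..<1}|lborel. (y - t) powr (-1 - a - b) * y powr a * (1 - y) powr b)
         = t powr (-b) * (1 - t) powr (-a) * stieltjes_powr b a t"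
    using left(2) by (simp add: mult_ac)
qed

lemma sin_kernel_integral_identity:
  fixes mu nu t :: real
  assumes mu: "-1 < mu" "mu < 0" and nu: "-1 < nu" "nu < 0" and t: "0 < t" "t < 1"
  shows "sin (pi * nu) * (LINT y:{0<..<t}|lborel. (t - y) powr (-1 - mu - nu) * y powr nu * (1 - y) powr mu)
       + sin (pi * mu) * (LINT y:{t<..<1}|lborel. (y - t) powr (-1 - mu - nu) * y powr nu * (1 - y) powr mu)
       = - pi"
proof -
  have exp: "-1 - nu - mu = -1 - mu - nu" by simp
  note left = left_kernel_integral(2)[OF nu mu(2) t, unfolded exp]
  note right = right_kernel_integral(2)[OF nu(2) mu t, unfolded exp]
  have "0 < 1 - t" "1 - t < 1" using t by auto
  note reflection = stieltjes_powr_reflection[OF mu nu this]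
  show ?thesis
    unfolding left right using reflection t
    by (simp add: powr_minus field_simps)
qed

section \<open>Fractional integrals of weighted Jacobi polynomials\<close>

locale jacobi_exponents =
  fixes mu nu :: real
  assumes mu: "-1 < mu" "mu < 0" and nu: "-1 < nu" "nu < 0"
begin

text \<open>\<open>\<kappa>\<close> is \<open>\<rho> - 1\<close> for the order \<open>\<rho> = 2 - \<alpha>\<close> of the fractional integrals.\<close>

definition \<kappa> :: real where
  "\<kappa> = -1 - mu - nu"

lemma kappa_gt: "-1 < \<kappa>" "0 < \<kappa> + 1"
  using mu nu by (auto simp: \<kappa>_def)

lemma mu_not_Ints: "mu \<notin> \<int>"
  using mu by (intro not_Ints_between[of "-1"]) auto

definition weight :: "nat \<Rightarrow> real \<Rightarrow> real" where
  "weight m y = y powr nu * (1 - y) powr mu * (1 - y) ^ m"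

definition left_int :: "nat \<Rightarrow> real \<Rightarrow> real" where
  "left_int m t = (LINT y:{0<..<t}|lborel. (t - y) powr \<kappa> * weight m y)"

definition right_int :: "nat \<Rightarrow> real \<Rightarrow> real" where
  "right_int m t = (LINT y:{t<..<1}|lborel. (y - t) powr \<kappa> * weight m y)"

lemma weight_nonneg: "y < 1 \<Longrightarrow> 0 \<le> weight m y"
  by (simp add: weight_def)

lemma weight_le:
  assumes "0 < y" "y < 1"
  shows "weight m y \<le> y powr nu * (1 - y) powr mu"
proof -
  have "(1 - y) ^ m \<le> 1"
    using assms by (intro power_le_one) auto
  thus ?thesis
    unfolding weight_def using assms by (intro mult_left_le) auto
qed

lemma set_integrable_left_kernel:
  assumes t: "0 < t" "t < 1" and e: "\<kappa> \<le> e"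
  shows "set_integrable lborel {0<..<t} (\<lambda>y. (t - y) powr e * weight m y)"
proof (rule set_integrable_bound)
  show "set_integrable lborel {0<..<t} (\<lambda>y. (t - y) powr \<kappa> * y powr nu * (1 - y) powr mu)"
    using left_kernel_integral(1)[OF nu mu(2) t] by (simp add: \<kappa>_def algebra_simps)
  show "set_borel_measurable lborel {0<..<t} (\<lambda>y. (t - y) powr e * weight m y)"
    unfolding set_borel_measurable_def weight_def by measurable
  show "AE y in lborel. y \<in> {0<..<t} \<longrightarrow>
          norm ((t - y) powr e * weight m y) \<le> norm ((t - y) powr \<kappa> * y powr nu * (1 - y) powr mu)"
  proof (rule AE_I2, intro impI)
    fix y assume y: "y \<in> {0<..<t}"
    have "(t - y) powr e \<le> (t - y) powr \<kappa>"
      using y t e by (intro powr_mono') auto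
    moreover have "0 \<le> weight m y" "weight m y \<le> y powr nu * (1 - y) powr mu"
      using y t by (auto intro: weight_nonneg weight_le)
    ultimately show "norm ((t - y) powr e * weight m y) \<le> norm ((t - y) powr \<kappa> * y powr nu * (1 - y) powr mu)"
      by (auto simp: abs_mult mult.assoc intro!: mult_mono)
  qed
qed

lemma set_integrable_right_kernel:
  assumes t: "0 < t" "t < 1" and e: "\<kappa> \<le> e"
  shows "set_integrable lborel {t<..<1} (\<lambda>y. (y - t) powr e * weight m y)"
proof (rule set_integrable_bound)
  show "set_integrable lborel {t<..<1} (\<lambda>y. (y - t) powr \<kappa> * y powr nu * (1 - y) powr mu)"
    using right_kernel_integral(1)[OF nu(2) mu t] by (simp add: \<kappa>_def algebra_simps)
  show "set_borel_measurable lborel {t<..<1} (\<lambda>y. (y - t) powr e * weight m y)"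
    unfolding set_borel_measurable_def weight_def by measurable
  show "AE y in lborel. y \<in> {t<..<1} \<longrightarrow>
          norm ((y - t) powr e * weight m y) \<le> norm ((y - t) powr \<kappa> * y powr nu * (1 - y) powr mu)"
  proof (rule AE_I2, intro impI)
    fix y assume y: "y \<in> {t<..<1}"
    have "(y - t) powr e \<le> (y - t) powr \<kappa>"
      using y t e by (intro powr_mono') auto
    moreover have "0 \<le> weight m y" "weight m y \<le> y powr nu * (1 - y) powr mu"
      using y t by (auto intro: weight_nonneg weight_le)
    ultimately show "norm ((y - t) powr e * weight m y) \<le> norm ((y - t) powr \<kappa> * y powr nu * (1 - y) powr mu)"
      by (auto simp: abs_mult mult.assoc intro!: mult_mono)
  qed
qed

lemma left_int_Suc:
  assumes t: "0 < t" "t < 1"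
  shows "left_int (Suc m) t = (1 - t) * left_int m t + (LINT y:{0<..<t}|lborel. (t - y) powr (\<kappa> + 1) * weight m y)"
proof -
  have "left_int (Suc m) t = (LINT y:{0<..<t}|lborel.
          (1 - t) * ((t - y) powr \<kappa> * weight m y) + (t - y) powr (\<kappa> + 1) * weight m y)"
    unfolding left_int_def
    by (rule set_lebesgue_integral_cong) (auto simp: weight_def powr_add algebra_simps)
  also have "\<dots> = (1 - t) * left_int m t + (LINT y:{0<..<t}|lborel. (t - y) powr (\<kappa> + 1) * weight m y)"
    using set_integral_add(2)[OF set_integrable_mult_right set_integrable_left_kernel[OF t, of "\<kappa> + 1"]]
      set_integrable_left_kernel[OF t order_refl]
    by (simp add: left_int_def)
  finally show ?thesis .
qed

lemma right_int_Suc: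
  assumes t: "0 < t" "t < 1"
  shows "right_int (Suc m) t = (1 - t) * right_int m t - (LINT y:{t<..<1}|lborel. (y - t) powr (\<kappa> + 1) * weight m y)"
proof -
  have "right_int (Suc m) t = (LINT y:{t<..<1}|lborel.
          (1 - t) * ((y - t) powr \<kappa> * weight m y) - (y - t) powr (\<kappa> + 1) * weight m y)"
    unfolding right_int_def
    by (rule set_lebesgue_integral_cong) (auto simp: weight_def powr_add algebra_simps)
  also have "\<dots> = (1 - t) * right_int m t - (LINT y:{t<..<1}|lborel. (y - t) powr (\<kappa> + 1) * weight m y)"
    using set_integral_diff(2)[OF set_integrable_mult_right set_integrable_right_kernel[OF t, of "\<kappa> + 1"]]
      set_integrable_right_kernel[OF t order_refl]
    by (simp add: right_int_def)
  finally show ?thesis .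
qed

lemma set_integral_left_int:
  assumes t: "0 < t" "t < 1"
  shows "set_integrable lborel {0<..<t} (left_int m)"
    and "(LINT \<tau>:{0<..<t}|lborel. left_int m \<tau>)
         = (LINT y:{0<..<t}|lborel. (t - y) powr (\<kappa> + 1) * weight m y) / (\<kappa> + 1)"
proof -
  define f where "f \<tau> y = (\<tau> - y) powr \<kappa> * weight m y" for \<tau> y
  have meas: "(\<lambda>(\<tau>, y). indicator {0<..<t} \<tau> * indicator {0<..<\<tau>} y * f \<tau> y)
                \<in> borel_measurable (lborel \<Otimes>\<^sub>M lborel)"
    unfolding f_def weight_def indicator_def of_bool_def greaterThanLessThan_iff by measurable
  have region: "\<tau> \<in> {0<..<t} \<and> y \<in> {0<..<\<tau>} \<longleftrightarrow> y \<in> {0<..<t} \<and> \<tau> \<in> {y<..<t}" for \<tau> y :: real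
    by auto
  have nonneg: "0 \<le> f \<tau> y" if "\<tau> \<in> {0<..<t}" "y \<in> {0<..<\<tau>}" for \<tau> y
    using that t by (auto simp: f_def intro!: mult_nonneg_nonneg weight_nonneg)
  have int_\<tau>: "set_integrable lborel {0<..<\<tau>} (f \<tau>)" if "\<tau> \<in> {0<..<t}" for \<tau>
    using that t set_integrable_left_kernel[of \<tau> \<kappa> m] by (simp add: f_def[abs_def])
  have int_y: "set_integrable lborel {y<..<t} (\<lambda>\<tau>. f \<tau> y)"
    and value_y: "(LINT \<tau>:{y<..<t}|lborel. f \<tau> y) = (t - y) powr (\<kappa> + 1) * weight m y / (\<kappa> + 1)"
    if "y \<in> {0<..<t}" for y
  proof -
    note power = set_integral_powr_sub_const[OF kappa_gt(1), of y y t]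
    show "set_integrable lborel {y<..<t} (\<lambda>\<tau>. f \<tau> y)"
      unfolding f_def using power(1) that by (intro set_integrable_mult_left) auto
    show "(LINT \<tau>:{y<..<t}|lborel. f \<tau> y) = (t - y) powr (\<kappa> + 1) * weight m y / (\<kappa> + 1)"
      unfolding f_def set_integral_mult_left using power(2) that by simp
  qed
  have "set_integrable lborel {0<..<t} (\<lambda>y. (t - y) powr (\<kappa> + 1) * weight m y / (\<kappa> + 1))"
    using set_integrable_left_kernel[OF t, of "\<kappa> + 1" m] by (intro set_integrable_divide) simp
  note swap = set_integral_swap_nonneg[OF meas region nonneg int_\<tau> int_y value_y this]
  show "set_integrable lborel {0<..<t} (left_int m)"
    using swap(1) by (simp add: left_int_def[abs_def] f_def)
  show "(LINT \<tau>:{0<..<t}|lborel. left_int m \<tau>)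
         = (LINT y:{0<..<t}|lborel. (t - y) powr (\<kappa> + 1) * weight m y) / (\<kappa> + 1)"
    using swap(2) by (simp add: left_int_def f_def)
qed

lemma set_integral_weight_Beta:
  shows "set_integrable lborel {0<..<1} (\<lambda>y. y powr (\<kappa> + 1) * weight m y)"
    and "(LINT y:{0<..<1}|lborel. y powr (\<kappa> + 1) * weight m y) = Beta (1 - mu) (mu + m + 1)"
proof -
  have eq: "y powr (\<kappa> + 1) * weight m y = y powr ((1 - mu) - 1) * (1 - y) powr ((mu + m + 1) - 1)"
    if "y \<in> {0<..<1}" for y
  proof -
    have "y powr (\<kappa> + 1) * y powr nu = y powr ((1 - mu) - 1)"
      using that by (simp add: \<kappa>_def flip: powr_add)
    moreover have "(1 - y) powr mu * (1 - y) ^ m = (1 - y) powr ((mu + m + 1) - 1)"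
      using that by (simp add: powr_realpow[symmetric] powr_add)
    ultimately show ?thesis
      by (simp add: weight_def mult_ac)
  qed
  have "0 < 1 - mu" "0 < mu + m + 1"
    using mu by auto
  note Beta = set_integral_Beta[OF this]
  show "set_integrable lborel {0<..<1} (\<lambda>y. y powr (\<kappa> + 1) * weight m y)"
    using Beta(1) by (rule set_integrable_cong[THEN iffD1, rotated -1]) (auto simp: eq)
  show "(LINT y:{0<..<1}|lborel. y powr (\<kappa> + 1) * weight m y) = Beta (1 - mu) (mu + m + 1)"
    unfolding Beta(2)[symmetric] by (rule set_lebesgue_integral_cong) (auto simp: eq)
qed

lemma set_integral_right_int:
  assumes t: "0 < t" "t < 1"
  shows "set_integrable lborel {0<..<t} (right_int m)"
    and "(LINT \<tau>:{0<..<t}|lborel. right_int m \<tau>)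
         = ((LINT y:{0<..<1}|lborel. y powr (\<kappa> + 1) * weight m y)
            - (LINT y:{t<..<1}|lborel. (y - t) powr (\<kappa> + 1) * weight m y)) / (\<kappa> + 1)"
proof -
  define f where "f \<tau> y = (y - \<tau>) powr \<kappa> * weight m y" for \<tau> y
  define h where "h y = y powr (\<kappa> + 1) * weight m y / (\<kappa> + 1)
                      - indicator {t<..<1} y * ((y - t) powr (\<kappa> + 1) * weight m y / (\<kappa> + 1))" for y
  have meas: "(\<lambda>(\<tau>, y). indicator {0<..<t} \<tau> * indicator {\<tau><..<1} y * f \<tau> y)
                \<in> borel_measurable (lborel \<Otimes>\<^sub>M lborel)"
    unfolding f_def weight_def indicator_def of_bool_def greaterThanLessThan_iff by measurable
  have region: "\<tau> \<in> {0<..<t} \<and> y \<in> {\<tau><..<1} \<longleftrightarrow> y \<in> {0<..<1} \<and> \<tau> \<in> {0<..<min t y}" for \<tau> y :: real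
    using t by auto
  have nonneg: "0 \<le> f \<tau> y" if "\<tau> \<in> {0<..<t}" "y \<in> {\<tau><..<1}" for \<tau> y
    using that by (auto simp: f_def intro!: mult_nonneg_nonneg weight_nonneg)
  have int_\<tau>: "set_integrable lborel {\<tau><..<1} (f \<tau>)" if "\<tau> \<in> {0<..<t}" for \<tau>
    using that t set_integrable_right_kernel[of \<tau> \<kappa> m] by (simp add: f_def[abs_def])
  have int_y: "set_integrable lborel {0<..<min t y} (\<lambda>\<tau>. f \<tau> y)"
    and value_y: "(LINT \<tau>:{0<..<min t y}|lborel. f \<tau> y) = h y"
    if "y \<in> {0<..<1}" for y
  proof -
    have "min t y \<le> y" "0 \<le> min t y"
      using that t by auto
    note power = set_integral_powr_const_sub[OF kappa_gt(1) this]
    show "set_integrable lborel {0<..<min t y} (\<lambda>\<tau>. f \<tau> y)"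
      unfolding f_def using power(1) by (rule set_integrable_mult_left)
    have "(y - min t y) powr (\<kappa> + 1) = indicator {t<..<1} y * (y - t) powr (\<kappa> + 1)"
      using that by (auto simp: min_def indicator_def)
    thus "(LINT \<tau>:{0<..<min t y}|lborel. f \<tau> y) = h y"
      unfolding f_def set_integral_mult_left power(2)
      by (simp add: h_def diff_divide_distrib algebra_simps)
  qed
  note Beta = set_integral_weight_Beta[of m]
  have int_R: "set_integrable lborel {0<..<1}
                 (\<lambda>y. indicator {t<..<1} y * ((y - t) powr (\<kappa> + 1) * weight m y / (\<kappa> + 1)))"
    using t set_integrable_right_kernel[OF t, of "\<kappa> + 1" m]
    by (subst set_integral_indicator_subset(1)) (auto intro: set_integrable_divide)
  have int_h: "set_integrable lborel {0<..<1} h"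
    unfolding h_def[abs_def] using Beta(1) int_R by (intro set_integral_diff set_integrable_divide)
  note swap = set_integral_swap_nonneg[OF meas region nonneg int_\<tau> int_y value_y int_h]
  show "set_integrable lborel {0<..<t} (right_int m)"
    using swap(1) by (simp add: right_int_def[abs_def] f_def)
  have "(LINT \<tau>:{0<..<t}|lborel. right_int m \<tau>) = (LINT y:{0<..<1}|lborel. h y)"
    using swap(2) by (simp add: right_int_def f_def)
  also have "\<dots> = (LINT y:{0<..<1}|lborel. y powr (\<kappa> + 1) * weight m y / (\<kappa> + 1))
      - (LINT y:{0<..<1}|lborel. indicator {t<..<1} y * ((y - t) powr (\<kappa> + 1) * weight m y / (\<kappa> + 1)))"
    unfolding h_def[abs_def] by (rule set_integral_diff(2)[OF set_integrable_divide[OF Beta(1)] int_R])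
  also have "(LINT y:{0<..<1}|lborel. indicator {t<..<1} y * ((y - t) powr (\<kappa> + 1) * weight m y / (\<kappa> + 1)))
             = (LINT y:{t<..<1}|lborel. (y - t) powr (\<kappa> + 1) * weight m y / (\<kappa> + 1))"
    using t by (intro set_integral_indicator_subset(2)) auto
  finally show "(LINT \<tau>:{0<..<t}|lborel. right_int m \<tau>)
         = ((LINT y:{0<..<1}|lborel. y powr (\<kappa> + 1) * weight m y)
            - (LINT y:{t<..<1}|lborel. (y - t) powr (\<kappa> + 1) * weight m y)) / (\<kappa> + 1)"
    by (simp only: set_integral_divide_zero diff_divide_distrib)
qed

lemma set_integral_sin_kernel_combination:
  assumes t: "0 < t" "t < 1"
  shows "(\<kappa> + 1) * (LINT \<tau>:{0<..<t}|lborel. sin (pi * nu) * left_int m \<tau> + sin (pi * mu) * right_int m \<tau>)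
         = sin (pi * nu) * (LINT y:{0<..<t}|lborel. (t - y) powr (\<kappa> + 1) * weight m y)
           + sin (pi * mu) * ((LINT y:{0<..<1}|lborel. y powr (\<kappa> + 1) * weight m y)
                               - (LINT y:{t<..<1}|lborel. (y - t) powr (\<kappa> + 1) * weight m y))"
proof -
  note left = set_integral_left_int[OF t, of m] and right = set_integral_right_int[OF t, of m]
  have "(LINT \<tau>:{0<..<t}|lborel. sin (pi * nu) * left_int m \<tau> + sin (pi * mu) * right_int m \<tau>)
        = sin (pi * nu) * (LINT \<tau>:{0<..<t}|lborel. left_int m \<tau>)
          + sin (pi * mu) * (LINT \<tau>:{0<..<t}|lborel. right_int m \<tau>)"
    using set_integral_add(2)[OF set_integrable_mult_right[OF left(1)] set_integrable_mult_right[OF right(1)]]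
    by simp
  thus ?thesis
    unfolding left(2) right(2) using kappa_gt(2) by (simp add: distrib_left)
qed

lemma sin_kernel_identity_weight:
  assumes "0 < t" "t < 1"
  shows "sin (pi * nu) * left_int m t + sin (pi * mu) * right_int m t = - pi * binom_conv (mu + m) \<kappa> m t"
  using assms
proof (induction m arbitrary: t)
  case 0
  thus ?case
    using sin_kernel_integral_identity[OF mu nu 0]
    by (simp add: left_int_def right_int_def weight_def binom_conv_def \<kappa>_def mult.assoc)
next
  case (Suc m)
  hence t: "0 < t" "t < 1" by auto
  define L where "L = (LINT y:{0<..<t}|lborel. (t - y) powr (\<kappa> + 1) * weight m y)"
  define R where "R = (LINT y:{t<..<1}|lborel. (y - t) powr (\<kappa> + 1) * weight m y)"
  define Y where "Y = (LINT y:{0<..<1}|lborel. y powr (\<kappa> + 1) * weight m y)"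
  define Q where "Q = (LINT \<tau>:{0<..<t}|lborel. binom_conv (mu + m) \<kappa> m \<tau>)"
  have "(LINT \<tau>:{0<..<t}|lborel. sin (pi * nu) * left_int m \<tau> + sin (pi * mu) * right_int m \<tau>) = - pi * Q"
    unfolding Q_def set_integral_mult_right[symmetric]
    by (rule set_lebesgue_integral_cong) (use t Suc.IH in auto)
  hence integrated: "sin (pi * nu) * L - sin (pi * mu) * R = - pi * (\<kappa> + 1) * Q - sin (pi * mu) * Y"
    using set_integral_sin_kernel_combination[OF t, of m] by (simp add: L_def R_def Y_def algebra_simps)
  have Beta: "sin (pi * mu) * Y = pi * ((mu + m) gchoose Suc m)"
    unfolding Y_def set_integral_weight_Beta(2) using sin_mult_Beta_eq_gbinomial[OF mu_not_Ints, of m] by simp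
  have "sin (pi * nu) * left_int (Suc m) t + sin (pi * mu) * right_int (Suc m) t
        = (1 - t) * (sin (pi * nu) * left_int m t + sin (pi * mu) * right_int m t)
          + (sin (pi * nu) * L - sin (pi * mu) * R)"
    unfolding left_int_Suc[OF t] right_int_Suc[OF t] L_def R_def by (simp add: algebra_simps)
  also have "\<dots> = - pi * ((1 - t) * binom_conv (mu + m) \<kappa> m t + (\<kappa> + 1) * Q + ((mu + m) gchoose Suc m))"
    unfolding integrated Beta Suc.IH[OF t] by (simp add: algebra_simps)
  also have "\<dots> = - pi * binom_conv (mu + Suc m) \<kappa> (Suc m) t"
    using binom_conv_Suc[OF t(1), of "mu + m" \<kappa> m] by (simp add: Q_def add_ac)
  finally show ?case .
qed

definition jacobi_coeff :: "nat \<Rightarrow> nat \<Rightarrow> real" where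
  "jacobi_coeff n s = ((n + mu) gchoose (n - s)) * ((n + mu + nu + s) gchoose s) * (-1) ^ s"

lemma jacobi_coeff_inner_sum:
  assumes "j \<le> n"
  shows "(\<Sum>i\<le>n - j. jacobi_coeff n (j + i) * ((mu + real (j + i)) gchoose i))
         = ((n + mu) gchoose (n - j)) * ((\<kappa> - j) gchoose n)"
proof -
  define N where "N = n + mu + nu"
  have "jacobi_coeff n (j + i) * ((mu + (j + i)) gchoose i)
        = ((n + mu) gchoose (n - j)) * (real ((n - j) choose (n - j - i)) * ((- (N + 1)) gchoose (j + i)))"
    if "i \<le> n - j" for i
  proof -
    have "((n + mu) gchoose (n - j)) * real ((n - j) choose (n - (j + i)))
          = ((n + mu) gchoose (n - (j + i))) * ((n + mu - real (n - (j + i))) gchoose (n - j - (n - (j + i))))"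
      using that by (intro gbinomial_mult_binomial) auto
    also have "n + mu - real (n - (j + i)) = mu + (j + i)"
      using that assms by (simp add: of_nat_diff)
    also have "n - j - (n - (j + i)) = i"
      using that by simp
    finally have "((n + mu) gchoose (n - j)) * real ((n - j) choose (n - (j + i)))
                  = ((n + mu) gchoose (n - (j + i))) * ((mu + (j + i)) gchoose i)" .
    moreover have "(-1) ^ (j + i) * ((n + mu + nu + (j + i)) gchoose (j + i)) = (- (N + 1)) gchoose (j + i)"
      using gbinomial_minus_shift[of "j + i" N] by (simp add: N_def add_ac)
    ultimately show ?thesis
      unfolding jacobi_coeff_def by (simp add: mult_ac)
  qed
  hence "(\<Sum>i\<le>n - j. jacobi_coeff n (j + i) * ((mu + (j + i)) gchoose i))
         = ((n + mu) gchoose (n - j)) * (\<Sum>i\<le>n - j. real ((n - j) choose (n - j - i)) * ((- (N + 1)) gchoose (j + i)))"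
    by (simp add: sum_distrib_left)
  also have "\<dots> = ((n + mu) gchoose (n - j)) * ((\<kappa> - j) gchoose n)"
    using gbinomial_Vandermonde_partial[OF assms, of "- (N + 1)"] assms
    by (simp add: N_def \<kappa>_def of_nat_diff algebra_simps)
  finally show ?thesis .
qed

lemma sum_jacobi_coeff_binom_conv:
  "(\<Sum>s\<le>n. jacobi_coeff n s * binom_conv (mu + s) \<kappa> s t) = (\<kappa> gchoose n) * jacobiP n mu nu (1 - 2 * t)"
proof -
  have "(\<Sum>s\<le>n. jacobi_coeff n s * binom_conv (mu + s) \<kappa> s t)
        = (\<Sum>s\<le>n. \<Sum>j\<le>s. jacobi_coeff n s * ((mu + s) gchoose (s - j)) * ((\<kappa> gchoose j) * t ^ j))"
    by (simp add: binom_conv_def sum_distrib_left mult.assoc)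
  also have "\<dots> = (\<Sum>j\<le>n. \<Sum>i\<le>n - j.
                    jacobi_coeff n (j + i) * ((mu + real (j + i)) gchoose i) * ((\<kappa> gchoose j) * t ^ j))"
    by (simp only: sum_triangle_reindex add_diff_cancel_left')
  also have "\<dots> = (\<Sum>j\<le>n. (\<kappa> gchoose j) * ((\<kappa> - j) gchoose n) * ((n + mu) gchoose (n - j)) * t ^ j)"
  proof (rule sum.cong[OF refl])
    fix j assume "j \<in> {..n}"
    hence "j \<le> n" by simp
    show "(\<Sum>i\<le>n - j. jacobi_coeff n (j + i) * ((mu + real (j + i)) gchoose i) * ((\<kappa> gchoose j) * t ^ j))
          = (\<kappa> gchoose j) * ((\<kappa> - j) gchoose n) * ((n + mu) gchoose (n - j)) * t ^ j"
      unfolding sum_distrib_right[symmetric] jacobi_coeff_inner_sum[OF \<open>j \<le> n\<close>] by (simp only: mult_ac)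
  qed
  also have "\<dots> = (\<kappa> gchoose n) *
                 (\<Sum>j\<le>n. ((n + mu) gchoose (n - j)) * ((n + mu + nu + j) gchoose j) * (- t) ^ j)"
    unfolding sum_distrib_left
  proof (rule sum.cong[OF refl])
    fix j
    have "(\<kappa> gchoose j) * ((\<kappa> - j) gchoose n) = (\<kappa> gchoose (n + j)) * real ((n + j) choose j)"
      using gbinomial_mult_binomial[of j "n + j" \<kappa>] by simp
    also have "(n + j) choose j = (n + j) choose n"
      using binomial_symmetric[of j "n + j"] by simp
    also have "(\<kappa> gchoose (n + j)) * real ((n + j) choose n) = (\<kappa> gchoose n) * ((\<kappa> - n) gchoose j)"
      using gbinomial_mult_binomial[of n "n + j" \<kappa>] by simp
    also have "\<kappa> - real n = - ((n + mu + nu) + 1)"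
      by (simp add: \<kappa>_def)
    finally have swap: "(\<kappa> gchoose j) * ((\<kappa> - j) gchoose n)
                        = (\<kappa> gchoose n) * ((-1) ^ j * ((n + mu + nu + j) gchoose j))"
      by (simp only: gbinomial_minus_shift)
    show "(\<kappa> gchoose j) * ((\<kappa> - j) gchoose n) * ((n + mu) gchoose (n - j)) * t ^ j
          = (\<kappa> gchoose n) * (((n + mu) gchoose (n - j)) * ((n + mu + nu + j) gchoose j) * (- t) ^ j)"
      unfolding swap power_minus[of t j] by (simp only: mult_ac)
  qed
  also have "\<dots> = (\<kappa> gchoose n) * jacobiP n mu nu (1 - 2 * t)"
    by (simp add: jacobiP_altdef)
  finally show ?thesis .
qed

lemma omega_star_G_expansion:
  "omega_star mu nu y * G n mu nu y = (\<Sum>s\<le>n. jacobi_coeff n s * weight s y)"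
proof -
  have "(2 * y - 1 - 1) / 2 = (-1) * (1 - y)"
    by simp
  hence "G n mu nu y = (\<Sum>s\<le>n. ((n + mu) gchoose (n - s)) * ((n + mu + nu + s) gchoose s) * ((-1) * (1 - y)) ^ s)"
    unfolding G_def jacobiP_altdef by (simp only:)
  also have "\<dots> = (\<Sum>s\<le>n. jacobi_coeff n s * (1 - y) ^ s)"
    unfolding power_mult_distrib jacobi_coeff_def by (simp only: mult_ac)
  finally show ?thesis
    by (simp add: omega_star_def weight_def sum_distrib_left mult_ac)
qed

lemma left_frac_int_omega_star_G:
  assumes t: "0 < t" "t < 1"
  shows "left_frac_int (\<kappa> + 1) 0 (\<lambda>y. omega_star mu nu y * G n mu nu y) t
         = (\<Sum>s\<le>n. jacobi_coeff n s * left_int s t) / Gamma (\<kappa> + 1)"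
proof -
  have "(LBINT y=ereal 0..ereal t. (t - y) powr \<kappa> * (omega_star mu nu y * G n mu nu y))
        = (LINT y:{0<..<t}|lborel. (\<Sum>s\<le>n. jacobi_coeff n s * ((t - y) powr \<kappa> * weight s y)))"
    using t by (simp add: interval_integral_Ioo omega_star_G_expansion sum_distrib_left mult_ac)
  also have "\<dots> = (\<Sum>s\<le>n. jacobi_coeff n s * left_int s t)"
    using set_integrable_left_kernel[OF t order_refl]
    by (simp add: set_integral_sum left_int_def)
  finally show ?thesis
    by (simp add: left_frac_int_def)
qed

lemma right_frac_int_omega_star_G:
  assumes t: "0 < t" "t < 1"
  shows "right_frac_int (\<kappa> + 1) 1 (\<lambda>y. omega_star mu nu y * G n mu nu y) t
         = (\<Sum>s\<le>n. jacobi_coeff n s * right_int s t) / Gamma (\<kappa> + 1)"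
proof -
  have "(LBINT y=ereal t..ereal 1. (y - t) powr \<kappa> * (omega_star mu nu y * G n mu nu y))
        = (LINT y:{t<..<1}|lborel. (\<Sum>s\<le>n. jacobi_coeff n s * ((y - t) powr \<kappa> * weight s y)))"
    using t by (simp add: interval_integral_Ioo omega_star_G_expansion sum_distrib_left mult_ac)
  also have "\<dots> = (\<Sum>s\<le>n. jacobi_coeff n s * right_int s t)"
    using set_integrable_right_kernel[OF t order_refl]
    by (simp add: set_integral_sum right_int_def)
  finally show ?thesis
    by (simp add: right_frac_int_def)
qed

lemma sin_frac_int_omega_star_G:
  assumes t: "0 < t" "t < 1"
  shows "sin (pi * nu) * left_frac_int (\<kappa> + 1) 0 (\<lambda>y. omega_star mu nu y * G n mu nu y) t
         + sin (pi * mu) * right_frac_int (\<kappa> + 1) 1 (\<lambda>y. omega_star mu nu y * G n mu nu y) t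
         = - pi * (\<kappa> gchoose n) * (-1) ^ n * G n nu mu t / Gamma (\<kappa> + 1)"
proof -
  have "sin (pi * nu) * (\<Sum>s\<le>n. jacobi_coeff n s * left_int s t)
        + sin (pi * mu) * (\<Sum>s\<le>n. jacobi_coeff n s * right_int s t)
        = (\<Sum>s\<le>n. jacobi_coeff n s * (sin (pi * nu) * left_int s t + sin (pi * mu) * right_int s t))"
    by (simp add: sum_distrib_left sum.distrib algebra_simps)
  also have "\<dots> = - pi * (\<Sum>s\<le>n. jacobi_coeff n s * binom_conv (mu + s) \<kappa> s t)"
    by (simp add: sin_kernel_identity_weight[OF t] sum_distrib_left mult_ac)
  also have "\<dots> = - pi * (\<kappa> gchoose n) * ((-1) ^ n * G n nu mu t)"
    unfolding sum_jacobi_coeff_binom_conv G_def using jacobiP_swap_params[of n nu mu "2 * t - 1"]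
    by simp
  finally have sums: "sin (pi * nu) * (\<Sum>s\<le>n. jacobi_coeff n s * left_int s t)
                      + sin (pi * mu) * (\<Sum>s\<le>n. jacobi_coeff n s * right_int s t)
                      = - pi * (\<kappa> gchoose n) * ((-1) ^ n * G n nu mu t)" .
  have "0 < Gamma (\<kappa> + 1)"
    using kappa_gt(2) by (rule Gamma_real_pos)
  with sums show ?thesis
    unfolding left_frac_int_omega_star_G[OF t] right_frac_int_omega_star_G[OF t]
    by (simp add: field_simps)
qed

end

lemma two_sided_int_balanced:
  assumes "p * sin (pi * mu) = (1 - p) * sin (pi * nu)"
  shows "two_sided_int alpha p a b mu nu rho v x
         = (sin (pi * nu) * left_frac_int rho a v x + sin (pi * mu) * right_frac_int rho b v x) / sin (pi * alpha)"
proof -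
  have "(sin (pi * mu) + sin (pi * nu)) * (p * left_frac_int rho a v x + (1 - p) * right_frac_int rho b v x)
        = (p * (sin (pi * mu) + sin (pi * nu))) * left_frac_int rho a v x
          + ((1 - p) * (sin (pi * mu) + sin (pi * nu))) * right_frac_int rho b v x"
    by (simp add: algebra_simps)
  also have "p * (sin (pi * mu) + sin (pi * nu)) = sin (pi * nu)"
    using assms by (simp add: algebra_simps)
  also have "(1 - p) * (sin (pi * mu) + sin (pi * nu)) = sin (pi * mu)"
    using assms by (simp add: algebra_simps)
  finally show ?thesis
    unfolding two_sided_int_def C_const_def by simp
qed

theorem theorem2p1:
  fixes p alpha mu nu t :: real and n :: nat
  assumes "0 < p" "p < 1" "1 < alpha" "alpha < 2"
    and "alpha - 2 < mu" "mu < 0" "alpha - 2 < nu" "nu < 0"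
    and "mu + nu = alpha - 2"
    and "p * sin (pi * mu) = (1 - p) * sin (pi * nu)"
    and "0 < t" "t < 1"
  shows "two_sided_int alpha p 0 1 mu nu (2 - alpha)
           (\<lambda>s. omega_star mu nu s * G n mu nu s) t
         = Gamma (real n + alpha - 1) / Gamma (real n + 1) * G n nu mu t"
proof -
  interpret jacobi_exponents mu nu
    using assms(3-8) by unfold_locales auto
  have kappa: "\<kappa> = 1 - alpha" "\<kappa> + 1 = 2 - alpha"
    using assms(9) by (simp_all add: \<kappa>_def)
  have "alpha \<notin> \<int>"
    using assms(3,4) by (intro not_Ints_between[of 1]) auto
  have "alpha - 1 \<notin> \<int>\<^sub>\<le>\<^sub>0"
    using assms(3) by (auto elim!: nonpos_Ints_cases)
  have "two_sided_int alpha p 0 1 mu nu (2 - alpha) (\<lambda>s. omega_star mu nu s * G n mu nu s) t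
        = - pi * ((1 - alpha) gchoose n) * (-1) ^ n * G n nu mu t / (sin (pi * alpha) * Gamma (2 - alpha))"
    using sin_frac_int_omega_star_G[OF assms(11,12), of n]
    by (simp add: two_sided_int_balanced[OF assms(10)] kappa)
  also have "sin (pi * alpha) * Gamma (2 - alpha) = - pi / Gamma (alpha - 1)"
    using sin_mult_Gamma_reflection[OF \<open>alpha \<notin> \<int>\<close>] .
  also have "- pi * ((1 - alpha) gchoose n) * (-1) ^ n * G n nu mu t / (- pi / Gamma (alpha - 1))
             = Gamma (alpha - 1) * ((-1) ^ n * ((1 - alpha) gchoose n)) * G n nu mu t"
    by simp
  also have "Gamma (alpha - 1) * ((-1) ^ n * ((1 - alpha) gchoose n)) = Gamma (real n + alpha - 1) / Gamma (real n + 1)"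
    using Gamma_ratio_eq_gbinomial[OF \<open>alpha - 1 \<notin> \<int>\<^sub>\<le>\<^sub>0\<close>, of n] by (simp add: add_diff_eq)
  finally show ?thesis .
qed

end
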